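(* Let $T$ be a tiling of $\mathbb{R}^d$ with tiling space $\Omega_T$, and let $\{d_r\}_{r>0}$ be the family on $\Omega_T$ defined by $d_r(T_1,T_2)=\inf\{\varepsilon>0\mid\exists u\in\mathbb{R}^d,\ |u|<\varepsilon,\ (T_1+u)\cap rD=T_2\cap rD\}$ (with value $\infty$ if no such $u$ exists). Then the diffeology on $\Omega_T$ generated by the family of maps $\{F_{T_1}\colon\mathbb{R}^d\to\Omega_T,\ x\mapsto T_1+x\mid T_1\in\Omega_T\}$ coincides with the diffeology induced by $\{d_r\}_{r>0}$, namely the set of parametrizations $p\colon U_p\to\Omega_T$ such that for every $t_0\in U_p$ there exists $\delta>0$ with: (1) for each $r>0$, $t\mapsto d_r(p(t_0),p(t))$ is continuous on $B_\delta(t_0)$; (2) for each $t_1\in B_\delta(t_0)\setminus p^{-1}(p(t_0))$ and each $r>0$, $t\mapsto d_r(p(t_1),p(t))$ is smooth at $t_0$ (as a real-valued map on $B_\delta(t_0)$).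
   Context: A tiling of $\mathbb{R}^d$ ($d\ge1$) is a collection $T$ of subsets of $\mathbb{R}^d$ (tiles) such that: each tile is a translate of one of finitely many subsets $\tau_1,\dots,\tau_n$ (the prototiles); each tile is homeomorphic to a closed $d$-disk; the union of the tiles is $\mathbb{R}^d$; distinct tiles have disjoint interiors. For $A\subset\mathbb{R}^d$, $T\cap A=\{t\in T\mid t\cap A\ne\emptyset\}$; $T+x=\{t+x\mid t\in T\}$; $rD$ is the closed ball of radius $r$ about $0$ and $B_\rho(c)$ the open ball of radius $\rho$ about $c$. On the orbit $\{T+x\mid x\in\mathbb{R}^d\}$ the metric $d(T,T')$ is the infimum of the set of $\varepsilon>0$ for which there exist $u,v$ with $|u|,|v|<\varepsilon$ and $(T+u)\cap B_{1/\varepsilon}(0)=(T'+v)\cap B_{1/\varepsilon}(0)$, together with $1/\sqrt2$; $\Omega_T$ is the metric completion, each element regarded as a tiling whose tiles are translates of prototiles of $T$. A parametrization is a map from an open subset $U_p$ of some $\mathbb{R}^n$. A diffeology on a set $X$ is a set of parametrizations containing all constant ones, closed under locality (a parametrization whose restrictions to the members of some open cover of its domain are in the set is in the set) and under precomposition with smooth maps between open subsets of Euclidean spaces. The diffeology generated by a family $\mathscr F$ of parametrizations is the smallest diffeology containing $\mathscr F$. *)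

theory Defs
  imports "HOL-Analysis.Analysis"
begin

definition translate_tiling :: "'a::real_vector set set \<Rightarrow> 'a \<Rightarrow> 'a set set" where
  "translate_tiling T x = (\<lambda>t. (\<lambda>y. y + x) ` t) ` T"

text \<open>T \<inter> A in the paper's notation: tiles meeting A.\<close>
definition patch :: "'a set set \<Rightarrow> 'a set \<Rightarrow> 'a set set" where
  "patch T A = {t \<in> T. t \<inter> A \<noteq> {}}"

definition is_tiling :: "'a::euclidean_space set set \<Rightarrow> bool" where
  "is_tiling T \<longleftrightarrow>
     (\<exists>P. finite P \<and> (\<forall>t\<in>T. \<exists>\<tau>\<in>P. \<exists>x. t = (\<lambda>y. y + x) ` \<tau>)) \<and>
     (\<forall>t\<in>T. t homeomorphic cball (0::'a) 1) \<and>
     \<Union>T = UNIV \<and>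
     (\<forall>t\<in>T. \<forall>t'\<in>T. t \<noteq> t' \<longrightarrow> interior t \<inter> interior t' = {})"

text \<open>The tiling metric (defined by the same formula for any two tilings).\<close>
definition tdist :: "'a::euclidean_space set set \<Rightarrow> 'a set set \<Rightarrow> real" where
  "tdist T T' = Inf ({\<epsilon>. \<epsilon> > 0 \<and> (\<exists>u v. norm u < \<epsilon> \<and> norm v < \<epsilon> \<and>
        patch (translate_tiling T u) (ball 0 (1/\<epsilon>)) = patch (translate_tiling T' v) (ball 0 (1/\<epsilon>)))}
      \<union> {1 / sqrt 2})"

text \<open>The tiling space: the metric completion of the orbit, realised as the set of tilings
  (with tiles translates of tiles of T) that are limits of translates of T.\<close>
definition tiling_space :: "'a::euclidean_space set set \<Rightarrow> 'a set set set" where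
  "tiling_space T = {T'. is_tiling T' \<and> (\<forall>t\<in>T'. \<exists>s\<in>T. \<exists>x. t = (\<lambda>y. y + x) ` s) \<and>
      (\<forall>\<epsilon>>0. \<exists>x. tdist T' (translate_tiling T x) < \<epsilon>)}"

text \<open>The family d_r (value \<infinity> when no u exists: Inf of the empty set of ereals).\<close>
definition dr :: "real \<Rightarrow> 'a::euclidean_space set set \<Rightarrow> 'a set set \<Rightarrow> ereal" where
  "dr r T1 T2 = Inf (ereal ` {\<epsilon>. \<epsilon> > 0 \<and> (\<exists>u. norm u < \<epsilon> \<and>
       patch (translate_tiling T1 u) (cball 0 r) = patch T2 (cball 0 r))})"

section \<open>Euclidean spaces R^n, uniformly encoded as functions nat => real vanishing from n on\<close>

definition Rn :: "nat \<Rightarrow> (nat \<Rightarrow> real) set" where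
  "Rn n = {x. \<forall>i\<ge>n. x i = 0}"

definition Rdist :: "nat \<Rightarrow> (nat \<Rightarrow> real) \<Rightarrow> (nat \<Rightarrow> real) \<Rightarrow> real" where
  "Rdist n x y = sqrt (\<Sum>i<n. (x i - y i)^2)"

definition Rball :: "nat \<Rightarrow> (nat \<Rightarrow> real) \<Rightarrow> real \<Rightarrow> (nat \<Rightarrow> real) set" where
  "Rball n c r = {x \<in> Rn n. Rdist n c x < r}"

definition Ropen :: "nat \<Rightarrow> (nat \<Rightarrow> real) set \<Rightarrow> bool" where
  "Ropen n U \<longleftrightarrow> U \<subseteq> Rn n \<and> (\<forall>x\<in>U. \<exists>e>0. Rball n x e \<subseteq> U)"

definition Rcontinuous_on :: "nat \<Rightarrow> (nat \<Rightarrow> real) set \<Rightarrow> ((nat \<Rightarrow> real) \<Rightarrow> 'b::topological_space) \<Rightarrow> bool" where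
  "Rcontinuous_on n U f \<longleftrightarrow>
     (\<forall>x\<in>U. \<forall>S. open S \<and> f x \<in> S \<longrightarrow> (\<exists>e>0. \<forall>y\<in>U. Rdist n x y < e \<longrightarrow> f y \<in> S))"

fun Ck :: "nat \<Rightarrow> nat \<Rightarrow> (nat \<Rightarrow> real) set \<Rightarrow> ((nat \<Rightarrow> real) \<Rightarrow> real) \<Rightarrow> bool" where
  "Ck n 0 U f = Rcontinuous_on n U f"
| "Ck n (Suc k) U f = (Rcontinuous_on n U f \<and>
     (\<forall>i<n. \<exists>g. (\<forall>x\<in>U. ((\<lambda>s. f (x(i := x i + s))) has_real_derivative g x) (at 0)) \<and> Ck n k U g))"

definition Rsmooth :: "nat \<Rightarrow> (nat \<Rightarrow> real) set \<Rightarrow> ((nat \<Rightarrow> real) \<Rightarrow> real) \<Rightarrow> bool" where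
  "Rsmooth n U f \<longleftrightarrow> (\<forall>k. Ck n k U f)"

definition Rsmooth_map :: "nat \<Rightarrow> nat \<Rightarrow> (nat \<Rightarrow> real) set \<Rightarrow> ((nat \<Rightarrow> real) \<Rightarrow> (nat \<Rightarrow> real)) \<Rightarrow> bool" where
  "Rsmooth_map m n V g \<longleftrightarrow> g ` V \<subseteq> Rn n \<and> (\<forall>j<n. Rsmooth m V (\<lambda>x. g x j))"

definition Rsmooth_at :: "nat \<Rightarrow> (nat \<Rightarrow> real) \<Rightarrow> (nat \<Rightarrow> real) set \<Rightarrow> ((nat \<Rightarrow> real) \<Rightarrow> ereal) \<Rightarrow> bool" where
  "Rsmooth_at n t0 S f \<longleftrightarrow> (\<exists>V. Ropen n V \<and> t0 \<in> V \<and> V \<subseteq> S \<and>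
      (\<forall>t\<in>V. \<bar>f t\<bar> \<noteq> \<infinity>) \<and> Rsmooth n V (\<lambda>t. real_of_ereal (f t)))"

text \<open>A parametrization is a triple (n, U, p): U open in R^n, p : U -> X (extensional).\<close>
type_synonym 'x param = "nat \<times> (nat \<Rightarrow> real) set \<times> ((nat \<Rightarrow> real) \<Rightarrow> 'x)"

definition is_param :: "'x set \<Rightarrow> 'x param \<Rightarrow> bool" where
  "is_param X P \<longleftrightarrow> (case P of (n, U, p) \<Rightarrow> Ropen n U \<and> p \<in> U \<rightarrow>\<^sub>E X)"

definition diffeology :: "'x set \<Rightarrow> 'x param set \<Rightarrow> bool" where
  "diffeology X D \<longleftrightarrow>
     (\<forall>P\<in>D. is_param X P) \<and>
     (\<forall>n U c. Ropen n U \<and> c \<in> X \<longrightarrow> (n, U, restrict (\<lambda>_. c) U) \<in> D) \<and>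
     (\<forall>n U p. is_param X (n, U, p) \<and>
        (\<exists>\<V>. (\<forall>V\<in>\<V>. Ropen n V) \<and> \<Union>\<V> = U \<and> (\<forall>V\<in>\<V>. (n, V, restrict p V) \<in> D))
        \<longrightarrow> (n, U, p) \<in> D) \<and>
     (\<forall>n U p m V g. (n, U, p) \<in> D \<and> Ropen m V \<and> Rsmooth_map m n V g \<and> g ` V \<subseteq> U
        \<longrightarrow> (m, V, restrict (p \<circ> g) V) \<in> D)"

definition generated_diffeology :: "'x set \<Rightarrow> 'x param set \<Rightarrow> 'x param set" where
  "generated_diffeology X F = \<Inter>{D. diffeology X D \<and> F \<subseteq> D}"

definition basis_enum :: "nat \<Rightarrow> 'a::euclidean_space" where
  "basis_enum = (SOME b. bij_betw b {..<DIM('a)} Basis)"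

text \<open>The fixed linear isometry R^d (encoded) -> 'a.\<close>
definition vec_of :: "(nat \<Rightarrow> real) \<Rightarrow> 'a::euclidean_space" where
  "vec_of x = (\<Sum>i<DIM('a). x i *\<^sub>R basis_enum i)"

definition translation_params :: "'a::euclidean_space set set \<Rightarrow> 'a set set param set" where
  "translation_params T = {(DIM('a), Rn DIM('a),
       restrict (\<lambda>x. translate_tiling T1 (vec_of x)) (Rn DIM('a))) | T1. T1 \<in> tiling_space T}"

definition dr_diffeology :: "'a::euclidean_space set set \<Rightarrow> 'a set set param set" where
  "dr_diffeology T = {(n, U, p). is_param (tiling_space T) (n, U, p) \<and>
     (\<forall>t0\<in>U. \<exists>\<delta>>0. Rball n t0 \<delta> \<subseteq> U \<and>
        (\<forall>r>0. Rcontinuous_on n (Rball n t0 \<delta>) (\<lambda>t. dr r (p t0) (p t))) \<and>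
        (\<forall>t1 \<in> Rball n t0 \<delta> - {t\<in>U. p t = p t0}. \<forall>r>0.
            Rsmooth_at n t0 (Rball n t0 \<delta>) (\<lambda>t. dr r (p t1) (p t))))}"

end

theory Submission
  imports Defs
begin

text \<open>
  Distinct translates of a tiling that agree around the origin differ at least by a radius of
  balls contained in all tiles. Hence, near each point, a translation map x \<mapsto> T1 + x is an
  isometry for every d_r, so it satisfies both clauses; as both clauses survive the axioms of a
  diffeology, the generated diffeology lies in the d_r diffeology.

  Conversely, let p satisfy the clauses near t0. Continuity of d_r(p t0, p t) and connectedness
  of balls show that p t = p t0 + u t with u t short and continuous at t0. By clause (2),
  t \<mapsto> norm (u t - u t1) is smooth near t0 whenever u t1 \<noteq> 0; by polarization so are the inner
  products of u t with differences u t1 - u t2, and these differences span all values of u, as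
  the values u t1 \<noteq> 0 accumulate at 0 unless u vanishes near t0. So u is smooth near t0, and p
  is locally a translation map composed with a smooth map.
\<close>

section \<open>Euclidean space in coordinates\<close>

lemma Rdist_L2: "Rdist n x y = L2_set (\<lambda>i. x i - y i) {..<n}"
  by (simp add: Rdist_def L2_set_def)

lemma Rdist_nonneg[simp]: "0 \<le> Rdist n x y"
  by (simp add: Rdist_def sum_nonneg)

lemma Rdist_sym: "Rdist n x y = Rdist n y x"
  unfolding Rdist_def by (simp add: power2_commute)

lemma Rdist_self[simp]: "Rdist n x x = 0"
  by (simp add: Rdist_def)

lemma Rdist_triangle: "Rdist n x z \<le> Rdist n x y + Rdist n y z"
proof -
  have "Rdist n x z = L2_set (\<lambda>i. (x i - y i) + (y i - z i)) {..<n}"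
    by (simp add: Rdist_L2)
  also have "\<dots> \<le> Rdist n x y + Rdist n y z"
    unfolding Rdist_L2 by (rule L2_set_triangle_ineq)
  finally show ?thesis .
qed

lemma Rdist_coord: "i < n \<Longrightarrow> \<bar>x i - y i\<bar> \<le> Rdist n x y"
  using member_le_L2_set[of "{..<n}" i "\<lambda>i. \<bar>x i - y i\<bar>"] by (simp add: Rdist_def L2_set_def)

lemma Rdist_le_sum: "Rdist n x y \<le> (\<Sum>i<n. \<bar>x i - y i\<bar>)"
  unfolding Rdist_L2 by (rule L2_set_le_sum_abs)

lemma Rdist_mono_coord:
  assumes "\<And>j. j < n \<Longrightarrow> \<bar>y j - w j\<bar> \<le> \<bar>y j - v j\<bar>"
  shows "Rdist n y w \<le> Rdist n y v"
  unfolding Rdist_def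
proof (rule real_sqrt_le_mono, rule sum_mono)
  fix j assume "j \<in> {..<n}"
  then show "(y j - w j)\<^sup>2 \<le> (y j - v j)\<^sup>2"
    using assms abs_le_square_iff by auto
qed

lemma Rdist_upd: "i < n \<Longrightarrow> Rdist n x (x(i := x i + s)) = \<bar>s\<bar>"
proof -
  assume i: "i < n"
  have "(\<Sum>j<n. (x j - (x(i := x i + s)) j)\<^sup>2) = (\<Sum>j<n. if j = i then s\<^sup>2 else 0)"
    by (intro sum.cong) auto
  also have "\<dots> = s\<^sup>2" using i by simp
  finally show ?thesis by (simp add: Rdist_def)
qed

lemma Rn_upd: "x \<in> Rn n \<Longrightarrow> i < n \<Longrightarrow> x(i := c) \<in> Rn n"
  by (auto simp: Rn_def)

lemma Rdist_pos: "x \<in> Rn n \<Longrightarrow> y \<in> Rn n \<Longrightarrow> x \<noteq> y \<Longrightarrow> 0 < Rdist n x y"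
proof -
  assume x: "x \<in> Rn n" and y: "y \<in> Rn n" and ne: "x \<noteq> y"
  then obtain i where i: "x i \<noteq> y i" by auto
  have "i < n"
  proof (rule ccontr)
    assume "\<not> i < n"
    then have "x i = 0" "y i = 0" using x y by (auto simp: Rn_def)
    with i show False by simp
  qed
  with i have "0 < \<bar>x i - y i\<bar>" by simp
  also have "\<dots> \<le> Rdist n x y" using Rdist_coord[OF \<open>i < n\<close>] .
  finally show ?thesis .
qed

lemma Rball_subset_Rn: "Rball n c r \<subseteq> Rn n"
  by (auto simp: Rball_def)

lemma Rball_mono: "r \<le> r' \<Longrightarrow> Rball n c r \<subseteq> Rball n c r'"
  by (auto simp: Rball_def)

lemma Ropen_Rball: "Ropen n (Rball n c r)"
  unfolding Ropen_def
proof (intro conjI ballI)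
  show "Rball n c r \<subseteq> Rn n" by (rule Rball_subset_Rn)
  fix x assume x: "x \<in> Rball n c r"
  then have "0 < r - Rdist n c x" by (simp add: Rball_def)
  moreover have "Rball n x (r - Rdist n c x) \<subseteq> Rball n c r"
  proof
    fix y assume "y \<in> Rball n x (r - Rdist n c x)"
    then show "y \<in> Rball n c r"
      using Rdist_triangle[of n c y x] by (auto simp: Rball_def)
  qed
  ultimately show "\<exists>e>0. Rball n x e \<subseteq> Rball n c r" by blast
qed

lemma Ropen_Rn: "Ropen n (Rn n)"
  unfolding Ropen_def using Rball_subset_Rn by (auto intro: exI[of _ 1])

lemma Ropen_subset: "Ropen n U \<Longrightarrow> U \<subseteq> Rn n"
  by (simp add: Ropen_def)

lemma Ropen_Rball_subset: "Ropen n U \<Longrightarrow> x \<in> U \<Longrightarrow> \<exists>e>0. Rball n x e \<subseteq> U"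
  by (simp add: Ropen_def)

lemma Ropen_Int: "Ropen n A \<Longrightarrow> Ropen n B \<Longrightarrow> Ropen n (A \<inter> B)"
  unfolding Ropen_def
proof (intro conjI ballI)
  assume A: "A \<subseteq> Rn n \<and> (\<forall>x\<in>A. \<exists>e>0. Rball n x e \<subseteq> A)"
     and B: "B \<subseteq> Rn n \<and> (\<forall>x\<in>B. \<exists>e>0. Rball n x e \<subseteq> B)"
  show "A \<inter> B \<subseteq> Rn n" using A by auto
  fix x assume "x \<in> A \<inter> B"
  then obtain e1 e2 where "e1 > 0" "Rball n x e1 \<subseteq> A" "e2 > 0" "Rball n x e2 \<subseteq> B"
    using A B by blast
  then show "\<exists>e>0. Rball n x e \<subseteq> A \<inter> B"
    using Rball_mono[of "min e1 e2" e1 n x] Rball_mono[of "min e1 e2" e2 n x]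
    by (intro exI[of _ "min e1 e2"]) auto
qed

lemma Ropen_eventually_upd:
  assumes "Ropen n U" "x \<in> U" "i < n"
  shows "eventually (\<lambda>s. x(i := x i + s) \<in> U) (nhds 0)"
proof -
  obtain e where e: "e > 0" "Rball n x e \<subseteq> U" using Ropen_Rball_subset[OF assms(1,2)] by blast
  have xR: "x \<in> Rn n" using assms Ropen_subset by blast
  show ?thesis unfolding eventually_nhds_metric
  proof (intro exI[of _ e] conjI allI impI)
    fix s :: real assume "dist s 0 < e"
    then have "x(i := x i + s) \<in> Rball n x e"
      using Rdist_upd[OF assms(3), of x s] Rn_upd[OF xR assms(3)]
      by (auto simp: Rball_def dist_real_def)
    then show "x(i := x i + s) \<in> U" using e by blast
  qed (use e in auto)
qed

definition Rnhds :: "nat \<Rightarrow> (nat \<Rightarrow> real) set \<Rightarrow> (nat \<Rightarrow> real) \<Rightarrow> (nat \<Rightarrow> real) filter" where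
  "Rnhds n U x = (INF e\<in>{0<..}. principal {y\<in>U. Rdist n x y < e})"

lemma eventually_Rnhds:
  "eventually P (Rnhds n U x) \<longleftrightarrow> (\<exists>e>0. \<forall>y\<in>U. Rdist n x y < e \<longrightarrow> P y)"
  unfolding Rnhds_def
proof (subst eventually_INF_base)
  show "{0<..} \<noteq> ({}::real set)" by auto
  fix a b :: real assume "a \<in> {0<..}" "b \<in> {0<..}"
  then show "\<exists>z\<in>{0<..}. principal {y \<in> U. Rdist n x y < z} \<le>
      inf (principal {y \<in> U. Rdist n x y < a}) (principal {y \<in> U. Rdist n x y < b})"
    by (intro bexI[of _ "min a b"]) auto
qed (auto simp: eventually_principal)

lemma Rcontinuous_on_tendsto:
  "Rcontinuous_on n U f \<longleftrightarrow> (\<forall>x\<in>U. (f \<longlongrightarrow> f x) (Rnhds n U x))"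
  unfolding Rcontinuous_on_def tendsto_def eventually_Rnhds by blast

lemma Rcontinuous_onI:
  "(\<And>x. x \<in> U \<Longrightarrow> (f \<longlongrightarrow> f x) (Rnhds n U x)) \<Longrightarrow> Rcontinuous_on n U f"
  by (simp add: Rcontinuous_on_tendsto)

lemma Rcontinuous_onD:
  "Rcontinuous_on n U f \<Longrightarrow> x \<in> U \<Longrightarrow> (f \<longlongrightarrow> f x) (Rnhds n U x)"
  by (simp add: Rcontinuous_on_tendsto)

lemma Rcontinuous_on_subset:
  "Rcontinuous_on n U f \<Longrightarrow> V \<subseteq> U \<Longrightarrow> Rcontinuous_on n V f"
  unfolding Rcontinuous_on_def by (meson subsetD)

lemma Rcontinuous_on_cong:
  "Rcontinuous_on n U f \<Longrightarrow> (\<And>x. x \<in> U \<Longrightarrow> f x = g x) \<Longrightarrow> Rcontinuous_on n U g"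
  unfolding Rcontinuous_on_def by metis

lemma Rcontinuous_on_less:
  assumes "Rcontinuous_on n S f" "x \<in> S" "f x < (c::ereal)"
  shows "\<exists>e>0. \<forall>y\<in>S. Rdist n x y < e \<longrightarrow> f y < c"
proof -
  have "\<exists>e>0. \<forall>y\<in>S. Rdist n x y < e \<longrightarrow> f y \<in> {..< c}"
    using assms unfolding Rcontinuous_on_def by (meson lessThan_iff open_lessThan)
  then show ?thesis by simp
qed

lemma tendsto_coord_Rnhds:
  assumes "i < n"
  shows "((\<lambda>y. y i) \<longlongrightarrow> x i) (Rnhds n U x)"
proof (rule tendstoI)
  fix e :: real assume "e > 0"
  then show "eventually (\<lambda>y. dist (y i) (x i) < e) (Rnhds n U x)"
    unfolding eventually_Rnhds
  proof (intro exI[of _ e] conjI ballI impI)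
    fix y assume "Rdist n x y < e"
    then show "dist (y i) (x i) < e"
      using Rdist_coord[OF assms, of x y] by (simp add: dist_real_def abs_minus_commute)
  qed (rule \<open>e > 0\<close>)
qed

lemma Rcontinuous_on_coord: "i < n \<Longrightarrow> Rcontinuous_on n U (\<lambda>y. y i)"
  by (rule Rcontinuous_onI) (rule tendsto_coord_Rnhds)

lemma Rcontinuous_on_const: "Rcontinuous_on n U (\<lambda>y. c)"
  by (rule Rcontinuous_onI) simp

lemma Rcontinuous_on_add:
  fixes f g :: "(nat \<Rightarrow> real) \<Rightarrow> real"
  shows "Rcontinuous_on n U f \<Longrightarrow> Rcontinuous_on n U g \<Longrightarrow> Rcontinuous_on n U (\<lambda>x. f x + g x)"
  by (auto simp: Rcontinuous_on_tendsto intro!: tendsto_add)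

lemma Rcontinuous_on_mult:
  fixes f g :: "(nat \<Rightarrow> real) \<Rightarrow> real"
  shows "Rcontinuous_on n U f \<Longrightarrow> Rcontinuous_on n U g \<Longrightarrow> Rcontinuous_on n U (\<lambda>x. f x * g x)"
  by (auto simp: Rcontinuous_on_tendsto intro!: tendsto_mult)

lemma Rcontinuous_on_ereal:
  "Rcontinuous_on n U f \<Longrightarrow> Rcontinuous_on n U (\<lambda>x. ereal (f x))"
  unfolding Rcontinuous_on_tendsto by (auto intro: tendsto_ereal)

lemma Rcontinuous_on_Rdist: "Rcontinuous_on n U (\<lambda>t. Rdist n a t)"
proof (rule Rcontinuous_onI)
  fix x assume "x \<in> U"
  have "((\<lambda>t. sqrt (\<Sum>i<n. (a i - t i)\<^sup>2)) \<longlongrightarrow> sqrt (\<Sum>i<n. (a i - x i)\<^sup>2)) (Rnhds n U x)"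
    by (intro tendsto_intros) (simp add: tendsto_coord_Rnhds)
  then show "((\<lambda>t. Rdist n a t) \<longlongrightarrow> Rdist n a x) (Rnhds n U x)" by (simp add: Rdist_def)
qed

lemma filterlim_Rnhds_Rnhds:
  assumes cont: "\<And>j. j < n \<Longrightarrow> Rcontinuous_on m V (\<lambda>s. h s j)"
    and hV: "h ` V \<subseteq> U" and s: "s \<in> V"
  shows "filterlim h (Rnhds n U (h s)) (Rnhds m V s)"
  unfolding filterlim_def le_filter_def eventually_filtermap
proof (intro allI impI)
  fix P assume "eventually P (Rnhds n U (h s))"
  then obtain e where e: "e > 0" "\<forall>y\<in>U. Rdist n (h s) y < e \<longrightarrow> P y"
    unfolding eventually_Rnhds by blast
  have "((\<lambda>s'. \<Sum>j<n. \<bar>h s j - h s' j\<bar>) \<longlongrightarrow> (\<Sum>j<n. \<bar>h s j - h s j\<bar>)) (Rnhds m V s)"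
    using cont s by (intro tendsto_intros) (auto dest: Rcontinuous_onD)
  then have "eventually (\<lambda>s'. (\<Sum>j<n. \<bar>h s j - h s' j\<bar>) < e) (Rnhds m V s)"
    using e(1) by (auto dest: order_tendstoD(2))
  moreover have "eventually (\<lambda>s'. s' \<in> V) (Rnhds m V s)"
    unfolding eventually_Rnhds by (auto intro: exI[of _ 1])
  ultimately show "eventually (\<lambda>x. P (h x)) (Rnhds m V s)"
  proof eventually_elim
    case (elim s')
    then have "Rdist n (h s) (h s') < e" using Rdist_le_sum[of n "h s" "h s'"] by linarith
    then show ?case using e hV elim by auto
  qed
qed

lemma Rcontinuous_on_compose:
  assumes f: "Rcontinuous_on n U f"
    and cont: "\<And>j. j < n \<Longrightarrow> Rcontinuous_on m V (\<lambda>s. h s j)"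
    and hV: "h ` V \<subseteq> U"
  shows "Rcontinuous_on m V (\<lambda>s. f (h s))"
proof (rule Rcontinuous_onI)
  fix s assume s: "s \<in> V"
  then have "(f \<longlongrightarrow> f (h s)) (Rnhds n U (h s))" using f hV by (auto intro: Rcontinuous_onD)
  then show "((\<lambda>s. f (h s)) \<longlongrightarrow> f (h s)) (Rnhds m V s)"
    using filterlim_Rnhds_Rnhds[OF cont hV s] by (rule filterlim_compose)
qed

lemma Ropen_preimage:
  assumes A: "Ropen m A" and cont: "\<And>j. j < n \<Longrightarrow> Rcontinuous_on m A (\<lambda>s. g s j)"
    and gA: "g ` A \<subseteq> Rn n" and W: "Ropen n W"
  shows "Ropen m {s\<in>A. g s \<in> W}"
  unfolding Ropen_def
proof (intro conjI ballI)
  show "{s\<in>A. g s \<in> W} \<subseteq> Rn m" using A Ropen_subset by blast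
  fix s assume s: "s \<in> {s\<in>A. g s \<in> W}"
  obtain e where e: "e > 0" "Rball n (g s) e \<subseteq> W" using Ropen_Rball_subset[OF W] s by blast
  have "eventually (\<lambda>y. y \<in> W) (Rnhds n (Rn n) (g s))"
    unfolding eventually_Rnhds using e by (auto simp: Rball_def)
  then have "eventually (\<lambda>s'. g s' \<in> W) (Rnhds m A s)"
    using filterlim_Rnhds_Rnhds[OF cont gA] s
    unfolding filterlim_def le_filter_def eventually_filtermap
    by blast
  then obtain e2 where e2: "e2 > 0" "\<forall>s'\<in>A. Rdist m s s' < e2 \<longrightarrow> g s' \<in> W"
    unfolding eventually_Rnhds by blast
  obtain e1 where e1: "e1 > 0" "Rball m s e1 \<subseteq> A" using Ropen_Rball_subset[OF A] s by blast
  have "Rball m s (min e1 e2) \<subseteq> {s\<in>A. g s \<in> W}"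
  proof
    fix s' assume s': "s' \<in> Rball m s (min e1 e2)"
    then have "s' \<in> A" using e1 by (auto simp: Rball_def)
    then show "s' \<in> {s\<in>A. g s \<in> W}" using e2 s' by (auto simp: Rball_def)
  qed
  then show "\<exists>e>0. Rball m s e \<subseteq> {s\<in>A. g s \<in> W}" using e1 e2 by (intro exI[of _ "min e1 e2"]) auto
qed

section \<open>Smooth functions\<close>

definition has_partial_on ::
    "(nat \<Rightarrow> real) set \<Rightarrow> ((nat \<Rightarrow> real) \<Rightarrow> real) \<Rightarrow> nat \<Rightarrow> ((nat \<Rightarrow> real) \<Rightarrow> real) \<Rightarrow> bool" where
  "has_partial_on U f i g \<longleftrightarrow> (\<forall>x\<in>U. ((\<lambda>s. f (x(i := x i + s))) has_real_derivative g x) (at 0))"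

lemma has_partial_onD:
  "has_partial_on U f i g \<Longrightarrow> x \<in> U \<Longrightarrow> ((\<lambda>s. f (x(i := x i + s))) has_real_derivative g x) (at 0)"
  by (simp add: has_partial_on_def)

lemma has_partial_on_cong:
  assumes "Ropen n U" "i < n" "has_partial_on U f i g" "\<And>x. x \<in> U \<Longrightarrow> f x = f' x"
  shows "has_partial_on U f' i g"
  unfolding has_partial_on_def
proof
  fix x assume x: "x \<in> U"
  have ev: "eventually (\<lambda>s. f (x(i := x i + s)) = f' (x(i := x i + s))) (nhds 0)"
    using Ropen_eventually_upd[OF assms(1) x assms(2)] by eventually_elim (use assms(4) in auto)
  show "((\<lambda>s. f' (x(i := x i + s))) has_real_derivative g x) (at 0)"
    using has_partial_onD[OF assms(3) x] DERIV_cong_ev[OF refl ev refl] by blast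
qed

lemma Ck_Suc_iff:
  "Ck n (Suc k) U f \<longleftrightarrow> Rcontinuous_on n U f \<and> (\<forall>i<n. \<exists>g. has_partial_on U f i g \<and> Ck n k U g)"
  by (simp add: has_partial_on_def)

lemma Ck_imp_Rcontinuous_on: "Ck n k U f \<Longrightarrow> Rcontinuous_on n U f"
  by (cases k) auto

lemma Ck_Suc_imp_Ck: "Ck n (Suc k) U f \<Longrightarrow> Ck n k U f"
proof (induction k arbitrary: f)
  case 0
  then show ?case by simp
next
  case (Suc k)
  then show ?case unfolding Ck_Suc_iff[of n "Suc k"] Ck_Suc_iff[of n k] by blast
qed

lemma Ck_subset: "Ck n k U f \<Longrightarrow> V \<subseteq> U \<Longrightarrow> Ck n k V f"
proof (induction k arbitrary: f)
  case 0 then show ?case by (auto intro: Rcontinuous_on_subset)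
next
  case (Suc k)
  then show ?case unfolding Ck_Suc_iff has_partial_on_def by (meson Rcontinuous_on_subset subsetD)
qed

lemma Ck_cong: "Ropen n U \<Longrightarrow> Ck n k U f \<Longrightarrow> (\<And>x. x \<in> U \<Longrightarrow> f x = f' x) \<Longrightarrow> Ck n k U f'"
proof (induction k arbitrary: f f')
  case 0 then show ?case by (auto intro: Rcontinuous_on_cong)
next
  case (Suc k)
  show ?case unfolding Ck_Suc_iff
  proof (intro conjI allI impI)
    show "Rcontinuous_on n U f'" using Suc.prems Ck_imp_Rcontinuous_on Rcontinuous_on_cong by blast
    fix i assume i: "i < n"
    then obtain g where "has_partial_on U f i g" "Ck n k U g" using Suc.prems(2)
      unfolding Ck_Suc_iff by blast
    with has_partial_on_cong[OF Suc.prems(1) i] Suc.prems(3)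
    show "\<exists>g. has_partial_on U f' i g \<and> Ck n k U g" by blast
  qed
qed

lemma Ck_const: "Ck n k U (\<lambda>x. c)"
proof (induction k arbitrary: c)
  case 0 then show ?case by (simp add: Rcontinuous_on_const)
next
  case (Suc k)
  show ?case unfolding Ck_Suc_iff has_partial_on_def
    using Suc by (auto simp: Rcontinuous_on_const intro!: exI[of _ "\<lambda>x. 0"])
qed

lemma Ck_coord: "i < n \<Longrightarrow> Ck n k U (\<lambda>x. x i)"
proof (induction k)
  case 0 then show ?case by (simp add: Rcontinuous_on_coord)
next
  case (Suc k)
  show ?case unfolding Ck_Suc_iff
  proof (intro conjI allI impI)
    show "Rcontinuous_on n U (\<lambda>x. x i)" using Suc.prems by (rule Rcontinuous_on_coord)
    fix j assume "j < n"
    have "has_partial_on U (\<lambda>x. x i) j (\<lambda>x. if i = j then 1 else 0)"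
      unfolding has_partial_on_def by (auto intro!: derivative_eq_intros)
    then show "\<exists>g. has_partial_on U (\<lambda>x. x i) j g \<and> Ck n k U g" using Ck_const by blast
  qed
qed

lemma Ck_add: "Ck n k U f \<Longrightarrow> Ck n k U g \<Longrightarrow> Ck n k U (\<lambda>x. f x + g x)"
proof (induction k arbitrary: f g)
  case 0 then show ?case by (simp add: Rcontinuous_on_add)
next
  case (Suc k)
  show ?case unfolding Ck_Suc_iff
  proof (intro conjI allI impI)
    show "Rcontinuous_on n U (\<lambda>x. f x + g x)"
      using Suc.prems Ck_imp_Rcontinuous_on Rcontinuous_on_add by blast
    fix i assume i: "i < n"
    obtain df where df: "has_partial_on U f i df" "Ck n k U df"
      using Suc.prems(1) i unfolding Ck_Suc_iff by blast
    obtain dg where dg: "has_partial_on U g i dg" "Ck n k U dg"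
      using Suc.prems(2) i unfolding Ck_Suc_iff by blast
    have "has_partial_on U (\<lambda>x. f x + g x) i (\<lambda>x. df x + dg x)"
      unfolding has_partial_on_def using df(1) dg(1)
      by (auto intro!: DERIV_add dest: has_partial_onD)
    then show "\<exists>h. has_partial_on U (\<lambda>x. f x + g x) i h \<and> Ck n k U h"
      using Suc.IH[OF df(2) dg(2)] by blast
  qed
qed

lemma Ck_mult: "Ck n k U f \<Longrightarrow> Ck n k U g \<Longrightarrow> Ck n k U (\<lambda>x. f x * g x)"
proof (induction k arbitrary: f g)
  case 0 then show ?case by (simp add: Rcontinuous_on_mult)
next
  case (Suc k)
  show ?case unfolding Ck_Suc_iff
  proof (intro conjI allI impI)
    show "Rcontinuous_on n U (\<lambda>x. f x * g x)"
      using Suc.prems Ck_imp_Rcontinuous_on Rcontinuous_on_mult by blast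
    fix i assume i: "i < n"
    obtain df where df: "has_partial_on U f i df" "Ck n k U df"
      using Suc.prems(1) i unfolding Ck_Suc_iff by blast
    obtain dg where dg: "has_partial_on U g i dg" "Ck n k U dg"
      using Suc.prems(2) i unfolding Ck_Suc_iff by blast
    have "has_partial_on U (\<lambda>x. f x * g x) i (\<lambda>x. df x * g x + dg x * f x)"
      unfolding has_partial_on_def
      using DERIV_mult[OF has_partial_onD[OF df(1)] has_partial_onD[OF dg(1)]] by simp
    moreover have "Ck n k U (\<lambda>x. df x * g x + dg x * f x)"
      using Suc.IH[OF df(2) Ck_Suc_imp_Ck[OF Suc.prems(2)]]
        Suc.IH[OF dg(2) Ck_Suc_imp_Ck[OF Suc.prems(1)]]
      by (rule Ck_add)
    ultimately show "\<exists>h. has_partial_on U (\<lambda>x. f x * g x) i h \<and> Ck n k U h" by blast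
  qed
qed

lemma Ck_sum:
  "finite A \<Longrightarrow> (\<And>j. j \<in> A \<Longrightarrow> Ck n k U (f j)) \<Longrightarrow> Ck n k U (\<lambda>x. \<Sum>j\<in>A. f j x)"
  by (induction A rule: finite_induct) (simp_all add: Ck_const Ck_add)

lemma Ck_cmult: "Ck n k U f \<Longrightarrow> Ck n k U (\<lambda>x. c * f x)"
  using Ck_mult[OF Ck_const] by blast

lemma Ck_diff: "Ck n k U f \<Longrightarrow> Ck n k U g \<Longrightarrow> Ck n k U (\<lambda>x. f x - g x)"
  using Ck_add[of n k U f "\<lambda>x. (-1) * g x"] Ck_cmult[of n k U g "-1"] by simp

lemma Rsmooth_imp_Rcontinuous_on: "Rsmooth n U f \<Longrightarrow> Rcontinuous_on n U f"
  using Ck_imp_Rcontinuous_on by (auto simp: Rsmooth_def)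

lemma Rsmooth_subset: "Rsmooth n U f \<Longrightarrow> V \<subseteq> U \<Longrightarrow> Rsmooth n V f"
  unfolding Rsmooth_def using Ck_subset by blast

lemma Rsmooth_cong:
  "Ropen n U \<Longrightarrow> Rsmooth n U f \<Longrightarrow> (\<And>x. x \<in> U \<Longrightarrow> f x = f' x) \<Longrightarrow> Rsmooth n U f'"
  unfolding Rsmooth_def using Ck_cong by blast

lemma Rsmooth_const: "Rsmooth n U (\<lambda>x. c)"
  by (simp add: Rsmooth_def Ck_const)

lemma Rsmooth_coord: "i < n \<Longrightarrow> Rsmooth n U (\<lambda>x. x i)"
  by (simp add: Rsmooth_def Ck_coord)

lemma Rsmooth_add: "Rsmooth n U f \<Longrightarrow> Rsmooth n U g \<Longrightarrow> Rsmooth n U (\<lambda>x. f x + g x)"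
  by (simp add: Rsmooth_def Ck_add)

lemma Rsmooth_diff: "Rsmooth n U f \<Longrightarrow> Rsmooth n U g \<Longrightarrow> Rsmooth n U (\<lambda>x. f x - g x)"
  by (simp add: Rsmooth_def Ck_diff)

lemma Rsmooth_mult: "Rsmooth n U f \<Longrightarrow> Rsmooth n U g \<Longrightarrow> Rsmooth n U (\<lambda>x. f x * g x)"
  by (simp add: Rsmooth_def Ck_mult)

lemma Rsmooth_cmult: "Rsmooth n U f \<Longrightarrow> Rsmooth n U (\<lambda>x. c * f x)"
  by (simp add: Rsmooth_def Ck_cmult)

lemma Rsmooth_sum:
  "finite A \<Longrightarrow> (\<And>j. j \<in> A \<Longrightarrow> Rsmooth n U (f j)) \<Longrightarrow> Rsmooth n U (\<lambda>x. \<Sum>j\<in>A. f j x)"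
  by (simp add: Rsmooth_def Ck_sum)

text \<open>Each Ck n k U f provides its own partial derivative; they all agree on U, so one of
  them is smooth.\<close>

lemma Rsmooth_has_partial_on:
  assumes U: "Ropen n U" and f: "Rsmooth n U f" and i: "i < n"
  shows "\<exists>g. has_partial_on U f i g \<and> Rsmooth n U g"
proof -
  obtain g0 where g0: "has_partial_on U f i g0"
    using f i unfolding Rsmooth_def by (metis Ck_Suc_iff)
  have "Ck n k U g0" for k
  proof -
    obtain g where g: "has_partial_on U f i g" "Ck n k U g"
      using f i unfolding Rsmooth_def by (metis Ck_Suc_iff)
    have "g x = g0 x" if "x \<in> U" for x
      using DERIV_unique[OF has_partial_onD[OF g(1) that] has_partial_onD[OF g0 that]] .
    then show ?thesis using Ck_cong[OF U g(2)] by blast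
  qed
  then show ?thesis using g0 unfolding Rsmooth_def by blast
qed

lemma MVT_between:
  fixes f f' :: "real \<Rightarrow> real"
  assumes "\<And>c. min a b \<le> c \<Longrightarrow> c \<le> max a b \<Longrightarrow> DERIV f c :> f' c"
  shows "\<exists>\<zeta>. min a b \<le> \<zeta> \<and> \<zeta> \<le> max a b \<and> f b - f a = (b - a) * f' \<zeta>"
proof (cases a b rule: linorder_cases)
  case less
  then obtain z where "a < z" "z < b" "f b - f a = (b - a) * f' z"
    using MVT2[of a b f f'] assms by auto
  then show ?thesis using less by (intro exI[of _ z]) auto
next
  case equal
  then show ?thesis by (intro exI[of _ a]) auto
next
  case greater
  then obtain z where "b < z" "z < a" "f a - f b = (a - b) * f' z"
    using MVT2[of b a f f'] assms by auto
  then show ?thesis using greater by (intro exI[of _ z]) (auto simp: algebra_simps)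
qed

lemma MVT_coord:
  assumes dphi: "has_partial_on U \<phi> k d\<phi>"
    and seg: "\<And>c. min a b \<le> c \<Longrightarrow> c \<le> max a b \<Longrightarrow> w(k := c) \<in> U"
  shows "\<exists>\<zeta>. min a b \<le> \<zeta> \<and> \<zeta> \<le> max a b \<and> \<phi> (w(k := b)) - \<phi> (w(k := a)) = (b - a) * d\<phi> (w(k := \<zeta>))"
proof (rule MVT_between)
  fix c assume "min a b \<le> c" "c \<le> max a b"
  then have "((\<lambda>t. \<phi> ((w(k := c))(k := (w(k := c)) k + t))) has_real_derivative
      d\<phi> (w(k := c))) (at 0)"
    using has_partial_onD[OF dphi seg] by blast
  then have "((\<lambda>t. \<phi> (w(k := t + c))) has_real_derivative d\<phi> (w(k := c))) (at 0)"
    by (simp add: add.commute)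
  then show "DERIV (\<lambda>c. \<phi> (w(k := c))) c :> d\<phi> (w(k := c))"
    using DERIV_shift[of "\<lambda>c. \<phi> (w(k := c))" "d\<phi> (w(k := c))" 0 c] by simp
qed

text \<open>Changing one coordinate at a time from y to z stays in the ball around y of radius
  Rdist n y z, so the mean value theorem applies to each step.\<close>

lemma increment_by_partials:
  assumes dphi: "\<And>k. k < n \<Longrightarrow> has_partial_on U \<phi> k (d\<phi> k)"
    and y: "y \<in> Rn n" and z: "z \<in> Rn n" and ball: "Rball n y \<rho> \<subseteq> U" and yz: "Rdist n y z < \<rho>"
  shows "\<exists>\<xi>. (\<forall>k<n. \<xi> k \<in> U \<and> Rdist n y (\<xi> k) \<le> Rdist n y z) \<and>
           \<phi> z - \<phi> y = (\<Sum>k<n. (z k - y k) * d\<phi> k (\<xi> k))"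
proof -
  define w where "w k = (\<lambda>j. if j < k then z j else y j)" for k
  have step: "\<exists>\<xi>. \<xi> \<in> U \<and> Rdist n y \<xi> \<le> Rdist n y z \<and>
      \<phi> (w (Suc k)) - \<phi> (w k) = (z k - y k) * d\<phi> k \<xi>" if k: "k < n" for k
  proof -
    have near: "(w k)(k := c) \<in> U \<and> Rdist n y ((w k)(k := c)) \<le> Rdist n y z"
      if "min (y k) (z k) \<le> c" "c \<le> max (y k) (z k)" for c
    proof -
      have le: "Rdist n y ((w k)(k := c)) \<le> Rdist n y z"
      proof (rule Rdist_mono_coord)
        fix j assume "j < n"
        show "\<bar>y j - ((w k)(k := c)) j\<bar> \<le> \<bar>y j - z j\<bar>"
          using that by (cases "j = k"; cases "j < k") (auto simp: w_def)
      qed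
      have "w k \<in> Rn n" using y z by (auto simp: w_def Rn_def)
      then have "(w k)(k := c) \<in> Rball n y \<rho>"
        using Rn_upd[OF _ k] le yz by (auto simp: Rball_def)
      then show ?thesis using ball le by auto
    qed
    obtain \<zeta> where \<zeta>: "min (y k) (z k) \<le> \<zeta>" "\<zeta> \<le> max (y k) (z k)"
      "\<phi> ((w k)(k := z k)) - \<phi> ((w k)(k := y k)) = (z k - y k) * d\<phi> k ((w k)(k := \<zeta>))"
      using MVT_coord[OF dphi[OF k], of "y k" "z k" "w k"] near by blast
    moreover have "(w k)(k := y k) = w k" "(w k)(k := z k) = w (Suc k)"
      by (auto simp: w_def)
    ultimately show ?thesis using near[OF \<zeta>(1,2)] by auto
  qed
  then obtain \<xi> where \<xi>: "\<forall>k\<in>{..<n}. \<xi> k \<in> U \<and> Rdist n y (\<xi> k) \<le> Rdist n y z \<and>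
      \<phi> (w (Suc k)) - \<phi> (w k) = (z k - y k) * d\<phi> k (\<xi> k)"
    by (metis lessThan_iff)
  have "w n = z" using y z by (auto simp: w_def Rn_def fun_eq_iff)
  moreover have "w 0 = y" by (auto simp: w_def)
  ultimately have "\<phi> z - \<phi> y = (\<Sum>k<n. \<phi> (w (Suc k)) - \<phi> (w k))"
    by (subst sum_lessThan_telescope) simp
  also have "\<dots> = (\<Sum>k<n. (z k - y k) * d\<phi> k (\<xi> k))"
    using \<xi> by (intro sum.cong) auto
  finally show ?thesis using \<xi> by auto
qed

text \<open>The intermediate points given by lemma increment_by_partials tend to H 0, where the
  partials of phi are continuous.\<close>

lemma has_real_derivative_compose_curve:
  assumes U: "Ropen n U"
    and dphi: "\<And>j. j < n \<Longrightarrow> has_partial_on U \<phi> j (d\<phi> j)"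
    and dphic: "\<And>j. j < n \<Longrightarrow> Rcontinuous_on n U (d\<phi> j)"
    and H0: "H 0 \<in> U" and HU: "eventually (\<lambda>\<sigma>. H \<sigma> \<in> U) (at 0)"
    and Hd: "\<And>j. j < n \<Longrightarrow> ((\<lambda>\<sigma>. H \<sigma> j) has_real_derivative dH j) (at 0)"
  shows "((\<lambda>\<sigma>. \<phi> (H \<sigma>)) has_real_derivative (\<Sum>j<n. d\<phi> j (H 0) * dH j)) (at 0)"
proof -
  define y where "y = H 0"
  have yR: "y \<in> Rn n" using H0 U Ropen_subset unfolding y_def by blast
  obtain \<rho> where \<rho>: "\<rho> > 0" "Rball n y \<rho> \<subseteq> U" using Ropen_Rball_subset[OF U H0] y_def by blast
  have "((\<lambda>\<sigma>. H \<sigma> j) \<longlongrightarrow> y j) (at 0)" if "j < n" for j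
    using DERIV_isCont[OF Hd[OF that]] by (simp add: isCont_def y_def)
  then have "((\<lambda>\<sigma>. sqrt (\<Sum>j<n. (y j - H \<sigma> j)\<^sup>2)) \<longlongrightarrow> sqrt (\<Sum>j<n. (y j - y j)\<^sup>2)) (at 0)"
    by (intro tendsto_intros) simp
  then have Rd: "((\<lambda>\<sigma>. Rdist n y (H \<sigma>)) \<longlongrightarrow> 0) (at 0)"
    by (simp add: Rdist_def)
  define good where "good \<sigma> \<longleftrightarrow> H \<sigma> \<in> U \<and> Rdist n y (H \<sigma>) < \<rho>" for \<sigma>
  have evgood: "eventually good (at 0)"
    using HU order_tendstoD(2)[OF Rd \<rho>(1)] unfolding good_def by eventually_elim auto
  define P where "P \<sigma> \<xi> \<longleftrightarrow> (\<forall>k<n. \<xi> k \<in> U \<and> Rdist n y (\<xi> k) \<le> Rdist n y (H \<sigma>)) \<and>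
      \<phi> (H \<sigma>) - \<phi> y = (\<Sum>k<n. (H \<sigma> k - y k) * d\<phi> k (\<xi> k))" for \<sigma> \<xi>
  define \<xi> where "\<xi> \<sigma> = (SOME \<xi>. P \<sigma> \<xi>)" for \<sigma>
  have P\<xi>: "P \<sigma> (\<xi> \<sigma>)" if "good \<sigma>" for \<sigma>
  proof -
    have "H \<sigma> \<in> Rn n" using that U Ropen_subset unfolding good_def by blast
    then have "\<exists>\<xi>. P \<sigma> \<xi>"
      unfolding P_def using that good_def by (intro increment_by_partials[OF dphi yR _ \<rho>(2)]) auto
    then show ?thesis unfolding \<xi>_def by (rule someI_ex)
  qed
  have lim1: "((\<lambda>\<sigma>. d\<phi> k (\<xi> \<sigma> k)) \<longlongrightarrow> d\<phi> k y) (at 0)" if k: "k < n" for k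
  proof -
    have "filterlim (\<lambda>\<sigma>. \<xi> \<sigma> k) (Rnhds n U y) (at 0)"
      unfolding filterlim_def le_filter_def eventually_filtermap
    proof (intro allI impI)
      fix Q assume "eventually Q (Rnhds n U y)"
      then obtain e where e: "e > 0" "\<forall>x\<in>U. Rdist n y x < e \<longrightarrow> Q x"
        unfolding eventually_Rnhds by blast
      show "eventually (\<lambda>\<sigma>. Q (\<xi> \<sigma> k)) (at 0)"
        using evgood order_tendstoD(2)[OF Rd e(1)]
        by eventually_elim (use P\<xi> k e(2) in \<open>fastforce simp: P_def\<close>)
    qed
    moreover have "(d\<phi> k \<longlongrightarrow> d\<phi> k y) (Rnhds n U y)"
      using Rcontinuous_onD[OF dphic[OF k] H0] by (simp add: y_def)
    ultimately show ?thesis by (rule filterlim_compose[rotated])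
  qed
  have lim2: "((\<lambda>\<sigma>. (H \<sigma> k - y k) / \<sigma>) \<longlongrightarrow> dH k) (at 0)" if k: "k < n" for k
    using Hd[OF k] unfolding has_field_derivative_iff by (simp add: y_def)
  have "((\<lambda>\<sigma>. \<Sum>k<n. d\<phi> k (\<xi> \<sigma> k) * ((H \<sigma> k - y k) / \<sigma>)) \<longlongrightarrow> (\<Sum>k<n. d\<phi> k y * dH k)) (at 0)"
    by (intro tendsto_sum tendsto_mult lim1 lim2) auto
  moreover have "eventually (\<lambda>\<sigma>. (\<Sum>k<n. d\<phi> k (\<xi> \<sigma> k) * ((H \<sigma> k - y k) / \<sigma>)) =
      (\<phi> (H \<sigma>) - \<phi> (H 0)) / (\<sigma> - 0)) (at 0)"
    using evgood
    by eventually_elim (use P\<xi> in \<open>auto simp: P_def y_def sum_divide_distrib mult.commute\<close>)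
  ultimately have "((\<lambda>\<sigma>. (\<phi> (H \<sigma>) - \<phi> (H 0)) / (\<sigma> - 0)) \<longlongrightarrow> (\<Sum>k<n. d\<phi> k y * dH k)) (at 0)"
    by (rule Lim_transform_eventually)
  then show ?thesis unfolding has_field_derivative_iff by (simp add: y_def)
qed

lemma has_partial_on_compose:
  assumes U: "Ropen n U" and V: "Ropen m V" and hV: "h ` V \<subseteq> U"
    and dphi: "\<And>j. j < n \<Longrightarrow> has_partial_on U \<phi> j (d\<phi> j)"
    and dphic: "\<And>j. j < n \<Longrightarrow> Rcontinuous_on n U (d\<phi> j)"
    and dh: "\<And>j. j < n \<Longrightarrow> has_partial_on V (\<lambda>s. h s j) i (dh j)"
    and i: "i < m"
  shows "has_partial_on V (\<lambda>s. \<phi> (h s)) i (\<lambda>s. \<Sum>j<n. d\<phi> j (h s) * dh j s)"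
  unfolding has_partial_on_def
proof
  fix s assume s: "s \<in> V"
  have "eventually (\<lambda>\<sigma>. h (s(i := s i + \<sigma>)) \<in> U) (at 0)"
    using Ropen_eventually_upd[OF V s i] hV unfolding eventually_at_filter
    by (auto elim!: eventually_mono)
  moreover have "h (s(i := s i + 0)) \<in> U" using s hV by auto
  moreover have "((\<lambda>\<sigma>. h (s(i := s i + \<sigma>)) j) has_real_derivative dh j s) (at 0)" if "j < n" for j
    using has_partial_onD[OF dh[OF that] s] .
  ultimately show "((\<lambda>\<sigma>. \<phi> (h (s(i := s i + \<sigma>)))) has_real_derivative
      (\<Sum>j<n. d\<phi> j (h s) * dh j s)) (at 0)"
    using has_real_derivative_compose_curve[OF U dphi dphic, of "\<lambda>\<sigma>. h (s(i := s i + \<sigma>))"] by simp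
qed

lemma Ck_compose:
  assumes U: "Ropen n U" and V: "Ropen m V" and hV: "h ` V \<subseteq> U"
    and hs: "\<And>j. j < n \<Longrightarrow> Rsmooth m V (\<lambda>s. h s j)"
  shows "Ck n k U \<phi> \<Longrightarrow> Ck m k V (\<lambda>s. \<phi> (h s))"
proof (induction k arbitrary: \<phi>)
  case 0
  then show ?case using Rcontinuous_on_compose[OF _ Rsmooth_imp_Rcontinuous_on[OF hs] hV] by simp
next
  case (Suc k)
  show ?case unfolding Ck_Suc_iff
  proof (intro conjI allI impI)
    show "Rcontinuous_on m V (\<lambda>s. \<phi> (h s))"
      using Rcontinuous_on_compose[OF Ck_imp_Rcontinuous_on[OF Suc.prems]
          Rsmooth_imp_Rcontinuous_on[OF hs] hV] .
    fix i assume i: "i < m"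
    have "\<forall>j\<in>{..<n}. \<exists>g. has_partial_on U \<phi> j g \<and> Ck n k U g"
      using Suc.prems unfolding Ck_Suc_iff by auto
    then obtain d\<phi> where d\<phi>: "\<forall>j\<in>{..<n}. has_partial_on U \<phi> j (d\<phi> j) \<and> Ck n k U (d\<phi> j)"
      by (rule bchoice[elim_format]) blast
    have "\<forall>j\<in>{..<n}. \<exists>g. has_partial_on V (\<lambda>s. h s j) i g \<and> Rsmooth m V g"
      using Rsmooth_has_partial_on[OF V hs i] by auto
    then obtain dh where dh: "\<forall>j\<in>{..<n}. has_partial_on V (\<lambda>s. h s j) i (dh j) \<and> Rsmooth m V (dh j)"
      by (rule bchoice[elim_format]) blast
    have "has_partial_on V (\<lambda>s. \<phi> (h s)) i (\<lambda>s. \<Sum>j<n. d\<phi> j (h s) * dh j s)"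
      by (rule has_partial_on_compose[OF U V hV _ _ _ i])
        (use d\<phi> dh in \<open>auto intro: Ck_imp_Rcontinuous_on\<close>)
    moreover have "Ck m k V (\<lambda>s. \<Sum>j<n. d\<phi> j (h s) * dh j s)"
      by (intro Ck_sum Ck_mult) (use d\<phi> dh Suc.IH in \<open>auto simp: Rsmooth_def\<close>)
    ultimately show "\<exists>g. has_partial_on V (\<lambda>s. \<phi> (h s)) i g \<and> Ck m k V g" by blast
  qed
qed

lemma Rsmooth_compose:
  assumes "Ropen n U" "Ropen m V" "h ` V \<subseteq> U" "\<And>j. j < n \<Longrightarrow> Rsmooth m V (\<lambda>s. h s j)"
    and "Rsmooth n U \<phi>"
  shows "Rsmooth m V (\<lambda>s. \<phi> (h s))"
  using Ck_compose[OF assms(1-4)] assms(5) unfolding Rsmooth_def by blast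

lemma Ropen_pos_halfline: "Ropen 1 {x \<in> Rn 1. 0 < x 0}"
  unfolding Ropen_def
proof (intro conjI ballI)
  fix x assume x: "x \<in> {x \<in> Rn 1. 0 < x 0}"
  have "Rball 1 x (x 0) \<subseteq> {x \<in> Rn 1. 0 < x 0}"
  proof
    fix y assume y: "y \<in> Rball 1 x (x 0)"
    then have "\<bar>x 0 - y 0\<bar> < x 0" using Rdist_coord[of 0 1 x y] by (auto simp: Rball_def)
    then show "y \<in> {x \<in> Rn 1. 0 < x 0}" using y by (auto simp: Rball_def)
  qed
  then show "\<exists>e>0. Rball 1 x e \<subseteq> {x \<in> Rn 1. 0 < x 0}" using x by auto
qed auto

lemma Ck_powr: "Ck 1 k {x \<in> Rn 1. 0 < x 0} (\<lambda>x. c * x 0 powr q)"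
proof (induction k arbitrary: c q)
  case 0
  have "Rcontinuous_on 1 {x \<in> Rn 1. 0 < x 0} (\<lambda>x. c * x 0 powr q)"
    by (rule Rcontinuous_onI) (intro tendsto_intros tendsto_coord_Rnhds, auto)
  then show ?case by simp
next
  case (Suc k)
  show ?case unfolding Ck_Suc_iff
  proof (intro conjI allI impI)
    show "Rcontinuous_on 1 {x \<in> Rn 1. 0 < x 0} (\<lambda>x. c * x 0 powr q)"
      using Ck_imp_Rcontinuous_on[OF Suc.IH] .
    fix i :: nat assume "i < 1"
    have "((\<lambda>s. c * (s + x 0) powr q) has_real_derivative c * q * x 0 powr (q - 1)) (at 0)"
      if "0 < x 0" for x :: "nat \<Rightarrow> real"
      using that by (auto intro!: derivative_eq_intros)
    then have "has_partial_on {x \<in> Rn 1. 0 < x 0} (\<lambda>x. c * x 0 powr q) i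
        (\<lambda>x. (c * q) * x 0 powr (q - 1))"
      using \<open>i < 1\<close> by (auto simp: has_partial_on_def add.commute)
    then show "\<exists>g. has_partial_on {x \<in> Rn 1. 0 < x 0} (\<lambda>x. c * x 0 powr q) i g \<and>
        Ck 1 k {x \<in> Rn 1. 0 < x 0} g"
      using Suc.IH by blast
  qed
qed

lemma Rsmooth_sqrt:
  assumes V: "Ropen m V" and f: "Rsmooth m V f" and pos: "\<And>s. s \<in> V \<Longrightarrow> 0 < f s"
  shows "Rsmooth m V (\<lambda>s. sqrt (f s))"
proof -
  have "Rsmooth 1 {x \<in> Rn 1. 0 < x 0} (\<lambda>x. 1 * x 0 powr (1/2))"
    unfolding Rsmooth_def using Ck_powr by blast
  then have sqrt: "Rsmooth 1 {x \<in> Rn 1. 0 < x 0} (\<lambda>x. sqrt (x 0))"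
    by (rule Rsmooth_cong[OF Ropen_pos_halfline]) (simp add: powr_half_sqrt)
  define h where "h s = (\<lambda>j::nat. if j = 0 then f s else 0)" for s
  have "h ` V \<subseteq> {x \<in> Rn 1. 0 < x 0}" using pos by (auto simp: h_def Rn_def)
  moreover have "Rsmooth m V (\<lambda>s. h s j)" if "j < 1" for j
    using that f by (simp add: h_def)
  ultimately have "Rsmooth m V (\<lambda>s. sqrt (h s 0))"
    using Rsmooth_compose[OF Ropen_pos_halfline V _ _ sqrt] by blast
  then show ?thesis by (simp add: h_def)
qed

lemma Rsmooth_Rdist:
  assumes V: "Ropen n V" and pos: "\<And>t. t \<in> V \<Longrightarrow> 0 < Rdist n a t"
  shows "Rsmooth n V (\<lambda>t. Rdist n a t)"
proof -
  have "Rsmooth n V (\<lambda>t. \<Sum>i<n. (a i - t i) * (a i - t i))"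
    by (intro Rsmooth_sum Rsmooth_mult Rsmooth_diff Rsmooth_const Rsmooth_coord) auto
  moreover have "0 < (\<Sum>i<n. (a i - t i) * (a i - t i))" if "t \<in> V" for t
    using pos[OF that] by (simp add: Rdist_def power2_eq_square)
  ultimately show ?thesis
    using Rsmooth_sqrt[OF V] by (simp add: Rdist_def power2_eq_square)
qed

section \<open>Translates of tilings\<close>

lemma image_translation_translation:
  "(\<lambda>y. y + b) ` ((\<lambda>y. y + a) ` t) = (\<lambda>y. y + (a + b)) ` (t::'a::real_vector set)"
  by (auto simp: image_image add.assoc)

lemma translation_image_inj:
  "(\<lambda>y. y + a) ` s = (\<lambda>y. y + a) ` t \<Longrightarrow> s = (t::'a::real_vector set)"
proof -
  assume "(\<lambda>y. y + a) ` s = (\<lambda>y. y + a) ` t"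
  then have "(\<lambda>y. y + (-a)) ` ((\<lambda>y. y + a) ` s) = (\<lambda>y. y + (-a)) ` ((\<lambda>y. y + a) ` t)" by simp
  then show ?thesis by (simp add: image_image)
qed

lemma mem_translation_image: "x \<in> (\<lambda>y. y + a) ` t \<longleftrightarrow> x - a \<in> (t::'a::real_vector set)"
  by (auto simp: image_iff) (metis diff_add_cancel)

lemma translate_tiling_add: "translate_tiling (translate_tiling X a) b = translate_tiling X (a + b)"
  unfolding translate_tiling_def image_image by (simp add: add.assoc)

lemma translate_tiling_0[simp]: "translate_tiling X 0 = X"
  unfolding translate_tiling_def by simp

lemma mem_translate_tiling: "s \<in> translate_tiling X a \<longleftrightarrow> (\<exists>t\<in>X. s = (\<lambda>y. y + a) ` t)"
  by (auto simp: translate_tiling_def)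

lemma patch_patch: "S \<subseteq> S' \<Longrightarrow> patch (patch X S') S = patch X S"
  unfolding patch_def by auto

lemma patch_eq_subset: "patch X S' = patch Y S' \<Longrightarrow> S \<subseteq> S' \<Longrightarrow> patch X S = patch Y S"
  by (metis patch_patch)

lemma patch_translate_tiling:
  "patch (translate_tiling X a) S =
    (\<lambda>t. (\<lambda>y. y + a) ` t) ` patch X ((\<lambda>y. y - a) ` (S::'a::real_vector set))"
proof -
  have "(\<lambda>y. y + a) ` t \<inter> S \<noteq> {} \<longleftrightarrow> t \<inter> (\<lambda>y. y - a) ` S \<noteq> {}" for t
  proof
    assume "(\<lambda>y. y + a) ` t \<inter> S \<noteq> {}"
    then obtain x where "x \<in> t" "x + a \<in> S" by auto
    then have "x \<in> t \<inter> (\<lambda>y. y - a) ` S" by (auto intro: image_eqI[where x="x + a"])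
    then show "t \<inter> (\<lambda>y. y - a) ` S \<noteq> {}" by blast
  next
    assume "t \<inter> (\<lambda>y. y - a) ` S \<noteq> {}"
    then obtain x where "x \<in> S" "x - a \<in> t" by auto
    then have "x \<in> (\<lambda>y. y + a) ` t \<inter> S" by (auto intro: image_eqI[where x="x - a"])
    then show "(\<lambda>y. y + a) ` t \<inter> S \<noteq> {}" by blast
  qed
  then show ?thesis unfolding patch_def translate_tiling_def by auto
qed

lemma is_tiling_prototiles:
  "is_tiling X \<Longrightarrow> \<exists>P. finite P \<and> (\<forall>t\<in>X. \<exists>\<tau>\<in>P. \<exists>x. t = (\<lambda>y. y + x) ` \<tau>)"
  unfolding is_tiling_def by (elim conjE) assumption

lemma is_tiling_homeomorphic_cball: "is_tiling X \<Longrightarrow> t \<in> X \<Longrightarrow> t homeomorphic cball (0::'a) 1"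
  for X :: "'a::euclidean_space set set"
  unfolding is_tiling_def by (elim conjE) (erule bspec)

lemma is_tiling_Union: "is_tiling X \<Longrightarrow> \<Union>X = UNIV"
  unfolding is_tiling_def by (elim conjE) assumption

lemma is_tiling_interior_disjoint:
  "is_tiling X \<Longrightarrow> t \<in> X \<Longrightarrow> t' \<in> X \<Longrightarrow> t \<noteq> t' \<Longrightarrow> interior t \<inter> interior t' = {}"
  for X :: "'a::euclidean_space set set"
  unfolding is_tiling_def by (elim conjE) simp

lemma tile_compact: "is_tiling X \<Longrightarrow> t \<in> X \<Longrightarrow> compact t"
  for X :: "'a::euclidean_space set set"
  using is_tiling_homeomorphic_cball homeomorphic_compactness compact_cball by blast

lemma tile_nonempty: "is_tiling X \<Longrightarrow> t \<in> X \<Longrightarrow> t \<noteq> {}"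
  for X :: "'a::euclidean_space set set"
proof
  assume "is_tiling X" "t \<in> X" "t = {}"
  then have "{} homeomorphic cball (0::'a) 1" using is_tiling_homeomorphic_cball by blast
  then show False by simp
qed

lemma homeomorphic_translation_image: "(\<lambda>y. y + a) ` t homeomorphic (t::'a::real_normed_vector set)"
proof -
  have "(\<lambda>y. y + a) ` t = (+) a ` t" by (intro image_cong refl) (simp add: add.commute)
  then show ?thesis using homeomorphic_translation[of t a] homeomorphic_sym[THEN iffD1] by simp
qed

lemma interior_translation_image:
  "interior ((\<lambda>y. y + a) ` t) = (\<lambda>y. y + a) ` interior (t::'a::real_normed_vector set)"
  using interior_translation[of a t] by (simp add: add.commute)

lemma is_tiling_translate:
  fixes X :: "'a::euclidean_space set set"
  assumes X: "is_tiling X"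
  shows "is_tiling (translate_tiling X a)"
  unfolding is_tiling_def
proof (intro conjI ballI impI)
  obtain P where P: "finite P" "\<forall>t\<in>X. \<exists>\<tau>\<in>P. \<exists>x. t = (\<lambda>y. y + x) ` \<tau>"
    using is_tiling_prototiles[OF X] by blast
  have "\<exists>\<tau>\<in>P. \<exists>x. t = (\<lambda>y. y + x) ` \<tau>" if t: "t \<in> translate_tiling X a" for t
  proof -
    obtain t0 where t0: "t0 \<in> X" "t = (\<lambda>y. y + a) ` t0" using t by (auto simp: mem_translate_tiling)
    then obtain \<tau> x where "\<tau> \<in> P" "t0 = (\<lambda>y. y + x) ` \<tau>" using P by blast
    then show ?thesis using t0(2) image_translation_translation by metis
  qed
  then show "\<exists>P. finite P \<and> (\<forall>t\<in>translate_tiling X a. \<exists>\<tau>\<in>P. \<exists>x. t = (\<lambda>y. y + x) ` \<tau>)"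
    using P(1) by blast
  show "t homeomorphic cball (0::'a) 1" if t: "t \<in> translate_tiling X a" for t
  proof -
    obtain t0 where "t0 \<in> X" "t = (\<lambda>y. y + a) ` t0" using t by (auto simp: mem_translate_tiling)
    then show ?thesis
      using is_tiling_homeomorphic_cball[OF X] homeomorphic_translation_image homeomorphic_trans
      by blast
  qed
  have "z \<in> \<Union>(translate_tiling X a)" for z
  proof -
    obtain t where t: "t \<in> X" "z - a \<in> t" using is_tiling_Union[OF X] by blast
    then have "z \<in> (\<lambda>y. y + a) ` t" by (simp only: mem_translation_image)
    moreover have "(\<lambda>y. y + a) ` t \<in> translate_tiling X a" using t(1) unfolding mem_translate_tiling
      by blast
    ultimately show ?thesis by blast
  qed
  then show "\<Union>(translate_tiling X a) = UNIV" by blast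
  show "interior t \<inter> interior t' = {}"
    if t: "t \<in> translate_tiling X a" "t' \<in> translate_tiling X a" "t \<noteq> t'" for t t'
  proof -
    obtain t0 t0' where "t0 \<in> X" "t = (\<lambda>y. y + a) ` t0" "t0' \<in> X" "t' = (\<lambda>y. y + a) ` t0'"
      using t(1,2) by (auto simp: mem_translate_tiling)
    moreover from this have "interior t0 \<inter> interior t0' = {}"
      using t(3) is_tiling_interior_disjoint[OF X, of t0 t0'] by blast
    ultimately show ?thesis by (auto simp: interior_translation_image)
  qed
qed

lemma ball_subset_translation_image:
  "ball z \<rho> \<subseteq> t \<Longrightarrow> ball (z + x) \<rho> \<subseteq> (\<lambda>y. y + x) ` (t::'a::real_normed_vector set)"
proof
  fix w assume "ball z \<rho> \<subseteq> t" "w \<in> ball (z + x) \<rho>"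
  moreover from this have "w - x \<in> ball z \<rho>" by (simp add: dist_norm algebra_simps)
  ultimately show "w \<in> (\<lambda>y. y + x) ` t" by (auto simp: mem_translation_image)
qed

lemma homeomorphic_cball_contains_ball:
  fixes t :: "'a::euclidean_space set"
  assumes "t homeomorphic cball (0::'a) 1"
  shows "\<exists>z e. 0 < e \<and> ball z e \<subseteq> t"
proof -
  obtain f g where hom: "homeomorphism (cball (0::'a) 1) t f g"
    using assms homeomorphic_sym unfolding homeomorphic_def by blast
  have cont: "continuous_on (ball 0 1) f"
    using hom unfolding homeomorphism_def by (meson ball_subset_cball continuous_on_subset)
  have inj: "inj_on f (ball 0 1)"
    using hom unfolding homeomorphism_def by (metis ball_subset_cball inj_on_def subsetD)
  have "open (f ` ball 0 1)" by (rule invariance_of_domain[OF cont open_ball inj])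
  moreover have "f ` ball 0 1 \<subseteq> t" using hom unfolding homeomorphism_def by auto
  moreover have "f 0 \<in> f ` ball 0 1" by simp
  ultimately show ?thesis using open_contains_ball by (meson order_trans)
qed

lemma tiles_contain_balls:
  assumes X: "is_tiling (X::'a::euclidean_space set set)"
  shows "\<exists>\<rho>>0. \<forall>t\<in>X. \<exists>z. ball z \<rho> \<subseteq> t"
proof -
  obtain P where P: "finite P" "\<forall>t\<in>X. \<exists>\<tau>\<in>P. \<exists>x. t = (\<lambda>y. y + x) ` \<tau>"
    using is_tiling_prototiles[OF X] by blast
  define G where "G = {\<tau>\<in>P. \<exists>t\<in>X. \<exists>x. t = (\<lambda>y. y + x) ` \<tau>}"
  have "\<exists>e z. 0 < e \<and> ball z e \<subseteq> \<tau>" if \<tau>: "\<tau> \<in> G" for \<tau>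
  proof -
    obtain t x where "t \<in> X" "t = (\<lambda>y. y + x) ` \<tau>" using \<tau> G_def by blast
    then have "\<tau> homeomorphic cball (0::'a) 1"
      using is_tiling_homeomorphic_cball[OF X] homeomorphic_translation_image homeomorphic_sym
        homeomorphic_trans by metis
    then show ?thesis using homeomorphic_cball_contains_ball by blast
  qed
  then obtain \<rho>f where \<rho>f: "\<forall>\<tau>\<in>G. \<rho>f \<tau> > 0 \<and> (\<exists>z. ball z (\<rho>f \<tau>) \<subseteq> \<tau>)"
    by (metis (mono_tags))
  define \<rho> where "\<rho> = Min (insert 1 (\<rho>f ` G))"
  have fin: "finite (insert 1 (\<rho>f ` G))" using P(1) G_def by auto
  have "\<rho> > 0" unfolding \<rho>_def using fin \<rho>f by (subst Min_gr_iff) auto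
  moreover have "\<exists>z. ball z \<rho> \<subseteq> t" if t: "t \<in> X" for t
  proof -
    obtain \<tau> x where \<tau>: "\<tau> \<in> P" "t = (\<lambda>y. y + x) ` \<tau>" using P t by blast
    then have "\<tau> \<in> G" using t G_def by blast
    then obtain z where "ball z (\<rho>f \<tau>) \<subseteq> \<tau>" using \<rho>f by blast
    moreover have "\<rho> \<le> \<rho>f \<tau>" unfolding \<rho>_def using fin \<open>\<tau> \<in> G\<close> by auto
    ultimately have "ball z \<rho> \<subseteq> \<tau>" by (meson order_trans subset_ball)
    then show ?thesis using ball_subset_translation_image \<tau>(2) by blast
  qed
  ultimately show ?thesis by blast
qed

lemma translation_fixing_compact_eq_0:
  assumes "compact (t::'a::euclidean_space set)" "t \<noteq> {}" "(\<lambda>y. y + c) ` t = t"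
  shows "c = 0"
proof -
  have "continuous_on t (\<lambda>y. inner c y)" by (intro continuous_intros)
  then obtain z where z: "z \<in> t" "\<forall>y\<in>t. inner c y \<le> inner c z"
    using continuous_attains_sup[OF assms(1,2)] by blast
  have "z + c \<in> t" using z(1) assms(3) by blast
  then have "inner c (z + c) \<le> inner c z" using z(2) by blast
  then have "inner c c \<le> 0" by (simp add: inner_add_right)
  then show ?thesis by (metis inner_gt_zero_iff not_le)
qed

lemma tile_translate_norm_ge:
  assumes X: "is_tiling X" and \<tau>: "\<tau> \<in> X" and \<tau>': "\<tau>' \<in> X" "\<tau>' = (\<lambda>y. y + c) ` \<tau>"
    and c: "c \<noteq> 0" and z: "ball z \<rho> \<subseteq> \<tau>"
  shows "\<rho> \<le> norm (c::'a::euclidean_space)"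
proof (rule ccontr)
  assume small: "\<not> \<rho> \<le> norm c"
  have "\<tau>' \<noteq> \<tau>"
    using translation_fixing_compact_eq_0[OF tile_compact[OF X \<tau>] tile_nonempty[OF X \<tau>]] \<tau>'(2) c
    by auto
  then have disj: "interior \<tau> \<inter> interior \<tau>' = {}" using is_tiling_interior_disjoint[OF X \<tau> \<tau>'(1)]
    by blast
  have "ball (z + c) \<rho> \<subseteq> \<tau>'" using ball_subset_translation_image[OF z] \<tau>'(2) by blast
  then have "ball (z + c) \<rho> \<subseteq> interior \<tau>'" by (simp add: interior_maximal)
  moreover have "ball z \<rho> \<subseteq> interior \<tau>" using z by (simp add: interior_maximal)
  moreover have "z + c \<in> ball z \<rho>" using small by (simp add: dist_norm)
  moreover have "0 < \<rho>" using small norm_ge_zero[of c] by linarith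
  then have "z + c \<in> ball (z + c) \<rho>" by simp
  ultimately have "z + c \<in> interior \<tau> \<inter> interior \<tau>'" by blast
  then show False using disj by blast
qed

text \<open>Distinct translates of X agreeing near the origin differ by at least eta; any radius of
  balls contained in all tiles will do (lemma translation_gap_exists).\<close>

definition translation_gap :: "'a::euclidean_space set set \<Rightarrow> real \<Rightarrow> bool" where
  "translation_gap X \<eta> \<longleftrightarrow> \<eta> > 0 \<and> (\<forall>r v v'. 0 \<le> r \<longrightarrow>
     patch (translate_tiling X v) (cball 0 r) = patch (translate_tiling X v') (cball 0 r)
      \<longrightarrow> v = v' \<or> \<eta> \<le> norm (v - v'))"

lemma translation_gap_exists:
  assumes X: "is_tiling (X::'a::euclidean_space set set)"
  shows "\<exists>\<eta>. translation_gap X \<eta>"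
proof -
  obtain \<rho> where \<rho>: "\<rho> > 0" "\<forall>t\<in>X. \<exists>z. ball z \<rho> \<subseteq> t" using tiles_contain_balls[OF X] by blast
  have "v = v' \<or> \<rho> \<le> norm (v - v')"
    if r: "0 \<le> r"
      and eq: "patch (translate_tiling X v) (cball 0 r) = patch (translate_tiling X v') (cball 0 r)"
    for r v v'
  proof -
    have "(0::'a) \<in> \<Union>(translate_tiling X v)" using is_tiling_Union[OF is_tiling_translate[OF X]]
      by simp
    then obtain \<sigma> where \<sigma>: "\<sigma> \<in> translate_tiling X v" "0 \<in> \<sigma>" by blast
    then have "\<sigma> \<in> patch (translate_tiling X v) (cball 0 r)" using r by (auto simp: patch_def)
    then have "\<sigma> \<in> patch (translate_tiling X v') (cball 0 r)" using eq by simp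
    then have "\<sigma> \<in> translate_tiling X v'" by (simp add: patch_def)
    then obtain \<tau> \<tau>' where \<tau>: "\<tau> \<in> X" "\<sigma> = (\<lambda>y. y + v) ` \<tau>" "\<tau>' \<in> X" "\<sigma> = (\<lambda>y. y + v') ` \<tau>'"
      using \<sigma>(1) by (auto simp: mem_translate_tiling)
    then have "(\<lambda>y. y + v') ` \<tau>' = (\<lambda>y. y + v') ` ((\<lambda>y. y + (v - v')) ` \<tau>)"
      by (simp add: image_translation_translation)
    then have "\<tau>' = (\<lambda>y. y + (v - v')) ` \<tau>" by (rule translation_image_inj)
    moreover obtain z where "ball z \<rho> \<subseteq> \<tau>" using \<rho>(2) \<tau>(1) by blast
    ultimately have "v - v' \<noteq> 0 \<Longrightarrow> \<rho> \<le> norm (v - v')"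
      using tile_translate_norm_ge[OF X \<tau>(1) \<tau>(3)] by blast
    then show ?thesis by auto
  qed
  then show ?thesis unfolding translation_gap_def using \<rho>(1) by blast
qed

lemma translation_gapD:
  "translation_gap X \<eta> \<Longrightarrow> 0 \<le> r \<Longrightarrow>
    patch (translate_tiling X v) (cball 0 r) = patch (translate_tiling X v') (cball 0 r) \<Longrightarrow>
    v \<noteq> v' \<Longrightarrow> \<eta> \<le> norm (v - v')"
  unfolding translation_gap_def by blast

lemma translation_gap_pos: "translation_gap X \<eta> \<Longrightarrow> 0 < \<eta>"
  by (simp add: translation_gap_def)

lemma translation_gap_unique:
  assumes "translation_gap X \<eta>" "0 \<le> r"
    "patch (translate_tiling X v) (cball 0 r) = patch (translate_tiling X v') (cball 0 r)"
    "norm v + norm v' < \<eta>"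
  shows "v = v'"
proof (rule ccontr)
  assume "v \<noteq> v'"
  then have "\<eta> \<le> norm (v - v')" using translation_gapD[OF assms(1-3)] by blast
  then show False using norm_triangle_ineq4[of v v'] assms(4) by linarith
qed

section \<open>The extended metrics d_r\<close>

lemma Inf_ereal_greaterThan:
  assumes "0 \<le> m"
  shows "Inf (ereal ` {\<epsilon>. \<epsilon> > 0 \<and> m < \<epsilon>}) = ereal m"
proof (rule antisym)
  show "ereal m \<le> Inf (ereal ` {\<epsilon>. \<epsilon> > 0 \<and> m < \<epsilon>})"
    by (rule Inf_greatest) auto
  show "Inf (ereal ` {\<epsilon>. \<epsilon> > 0 \<and> m < \<epsilon>}) \<le> ereal m"
  proof (rule ccontr)
    assume "\<not> ?thesis"
    then obtain z where z: "ereal m < ereal z" "ereal z < Inf (ereal ` {\<epsilon>. \<epsilon> > 0 \<and> m < \<epsilon>})"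
      using ereal_dense2 by (meson not_le)
    then have "z \<in> {\<epsilon>. \<epsilon> > 0 \<and> m < \<epsilon>}" using assms by auto
    then have "Inf (ereal ` {\<epsilon>. \<epsilon> > 0 \<and> m < \<epsilon>}) \<le> ereal z" by (intro Inf_lower) auto
    then show False using z(2) by simp
  qed
qed

text \<open>A shorter matching translation would be a second one within the gap.\<close>

lemma dr_translate_tiling:
  assumes g: "translation_gap X \<eta>" and r: "0 \<le> r" and small: "norm (b - a) < \<eta> / 2"
  shows "dr r (translate_tiling X a) (translate_tiling X b) = ereal (norm (b - a))"
proof -
  have "{\<epsilon>. \<epsilon> > 0 \<and> (\<exists>u. norm u < \<epsilon> \<and>
          patch (translate_tiling (translate_tiling X a) u) (cball 0 r) =
          patch (translate_tiling X b) (cball 0 r))}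
      = {\<epsilon>. \<epsilon> > 0 \<and> norm (b - a) < \<epsilon>}" (is "?L = ?R")
  proof (intro set_eqI iffI)
    fix \<epsilon> assume "\<epsilon> \<in> ?L"
    then obtain u where u: "\<epsilon> > 0" "norm u < \<epsilon>"
      "patch (translate_tiling X (a + u)) (cball 0 r) = patch (translate_tiling X b) (cball 0 r)"
      by (auto simp: translate_tiling_add)
    have "norm (b - a) \<le> norm u"
    proof (cases "a + u = b")
      case True
      then have "b - a = u" by auto
      then show ?thesis by simp
    next
      case False
      then have "\<eta> \<le> norm (a + u - b)" using translation_gapD[OF g r u(3)] by blast
      also have "\<dots> \<le> norm u + norm (b - a)"
        using norm_triangle_ineq4[of u "b - a"] by (simp add: algebra_simps)
      finally show ?thesis using small by simp
    qed
    then show "\<epsilon> \<in> ?R" using u by simp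
  next
    fix \<epsilon> assume "\<epsilon> \<in> ?R"
    then show "\<epsilon> \<in> ?L" by (auto simp: translate_tiling_add intro!: exI[of _ "b - a"])
  qed
  then show ?thesis unfolding dr_def by (simp add: Inf_ereal_greaterThan)
qed

lemma dr_self:
  assumes X: "is_tiling X" and r: "0 \<le> r"
  shows "dr r X X = 0"
proof -
  obtain \<eta> where g: "translation_gap X \<eta>" using translation_gap_exists[OF X] by blast
  show ?thesis
    using dr_translate_tiling[OF g r, of 0 0] translation_gap_pos[OF g]
    by (simp add: zero_ereal_def)
qed

lemma dr_less_ereal_D:
  assumes "dr r A B < ereal e"
  shows "\<exists>u. norm u < e \<and> patch (translate_tiling A u) (cball 0 r) = patch B (cball 0 r)"
proof -
  from assms obtain \<epsilon> u where "\<epsilon> < e" "norm u < \<epsilon>"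
    "patch (translate_tiling A u) (cball 0 r) = patch B (cball 0 r)"
    unfolding dr_def Inf_less_iff by auto
  then show ?thesis by (intro exI[of _ u]) auto
qed

lemma dr_le_ereal_I:
  assumes "norm u < e" "patch (translate_tiling A u) (cball 0 r) = patch B (cball 0 r)"
  shows "dr r A B \<le> ereal e"
  unfolding dr_def
proof (rule Inf_lower)
  have "0 < e" using assms(1) norm_ge_zero[of u] by linarith
  then show "ereal e \<in> ereal ` {\<epsilon>. \<epsilon> > 0 \<and> (\<exists>u. norm u < \<epsilon> \<and>
      patch (translate_tiling A u) (cball 0 r) = patch B (cball 0 r))}"
    using assms by auto
qed

lemma tiling_eqI_patches:
  fixes A B :: "'a::euclidean_space set set"
  assumes A: "is_tiling A" and B: "is_tiling B"
    and eq: "\<And>r. 1 \<le> r \<Longrightarrow> patch A (cball 0 r) = patch B (cball 0 r)"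
  shows "A = B"
proof -
  have "t \<in> Y" if Z: "is_tiling Z" and t: "t \<in> Z"
    and e: "\<And>r. 1 \<le> r \<Longrightarrow> patch Z (cball 0 r) = patch Y (cball 0 r)" for Z Y :: "'a set set" and t
  proof -
    obtain z where z: "z \<in> t" using tile_nonempty[OF Z t] by blast
    have "t \<in> patch Z (cball 0 (max 1 (norm z)))" using z t by (auto simp: patch_def)
    then have "t \<in> patch Y (cball 0 (max 1 (norm z)))" using e[of "max 1 (norm z)"] by simp
    then show ?thesis by (simp add: patch_def)
  qed
  from this[OF A _ eq] this[OF B _ eq[symmetric]] show ?thesis by blast
qed

lemma tdist_lessD:
  assumes "tdist A B < e" "e \<le> 1 / sqrt 2"
  shows "\<exists>\<epsilon> u v. 0 < \<epsilon> \<and> \<epsilon> < e \<and> norm u < \<epsilon> \<and> norm v < \<epsilon> \<and>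
     patch (translate_tiling A u) (ball 0 (1/\<epsilon>)) = patch (translate_tiling B v) (ball 0 (1/\<epsilon>))"
proof -
  let ?E = "{\<epsilon>. \<epsilon> > 0 \<and> (\<exists>u v. norm u < \<epsilon> \<and> norm v < \<epsilon> \<and>
        patch (translate_tiling A u) (ball 0 (1/\<epsilon>)) = patch (translate_tiling B v) (ball 0 (1/\<epsilon>)))}"
  have "Inf (?E \<union> {1 / sqrt 2}) < e" using assms(1) by (simp add: tdist_def)
  then obtain x where "x \<in> ?E \<union> {1 / sqrt 2}" "x < e" using cInf_lessD[of "?E \<union> {1 / sqrt 2}" e]
    by blast
  then have "x \<in> ?E" "x < e" using assms(2) by auto
  then show ?thesis by blast
qed

lemma tdist_leI:
  assumes "0 < \<epsilon>" "norm u < \<epsilon>" "norm v < \<epsilon>"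
    "patch (translate_tiling A u) (ball 0 (1/\<epsilon>)) = patch (translate_tiling B v) (ball 0 (1/\<epsilon>))"
  shows "tdist A B \<le> \<epsilon>"
proof -
  let ?E = "{\<epsilon>. \<epsilon> > 0 \<and> (\<exists>u v. norm u < \<epsilon> \<and> norm v < \<epsilon> \<and>
        patch (translate_tiling A u) (ball 0 (1/\<epsilon>)) = patch (translate_tiling B v) (ball 0 (1/\<epsilon>)))}"
  have "bdd_below (?E \<union> {1 / sqrt 2})" by (rule bdd_belowI[of _ 0]) auto
  moreover have "\<epsilon> \<in> ?E \<union> {1 / sqrt 2}" using assms by blast
  ultimately show ?thesis unfolding tdist_def by (rule cInf_lower[rotated])
qed

text \<open>Translating both tilings by a shrinks the ball of agreement by norm a, which costs
  little once the ball is large.\<close>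

lemma tdist_translate_tiling_small:
  assumes \<epsilon>: "0 < \<epsilon>"
  shows "\<exists>e>0. \<forall>A B. tdist A B < e \<longrightarrow>
           tdist (translate_tiling A a) (translate_tiling B a) < \<epsilon>"
proof -
  define m where "m = min \<epsilon> 1"
  have m: "0 < m" "m \<le> \<epsilon>" "m \<le> 1" using \<epsilon> by (auto simp: m_def)
  define \<epsilon>1 where "\<epsilon>1 = 1 / (1 / m + norm a + 1)"
  have \<epsilon>1pos: "0 < \<epsilon>1" using m by (simp add: \<epsilon>1_def add_pos_nonneg)
  have "1 \<le> 1 / m" using m by simp
  then have "2 \<le> 1 / m + norm a + 1" using norm_ge_zero[of a] by linarith
  then have "\<epsilon>1 \<le> 1 / 2" unfolding \<epsilon>1_def by (simp add: field_simps)
  also have "\<dots> \<le> 1 / sqrt 2" by (simp add: real_le_lsqrt)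
  finally have \<epsilon>1le: "\<epsilon>1 \<le> 1 / sqrt 2" .
  have "tdist (translate_tiling A a) (translate_tiling B a) < \<epsilon>" if AB: "tdist A B < \<epsilon>1" for A B
  proof -
    obtain e u v where e: "0 < e" "e < \<epsilon>1" "norm u < e" "norm v < e"
      and eq: "patch (translate_tiling A u) (ball 0 (1/e)) =
        patch (translate_tiling B v) (ball 0 (1/e))"
      using tdist_lessD[OF AB \<epsilon>1le] by blast
    define R where "R = 1 / e - norm a"
    have "1 / \<epsilon>1 < 1 / e" using e \<epsilon>1pos by (simp add: divide_strict_left_mono)
    then have R1: "1 / m + 1 < R" by (simp add: \<epsilon>1_def R_def)
    moreover have "1 / \<epsilon> \<le> 1 / m" using m by (simp add: divide_left_mono)
    moreover have "0 < 1 / m" using m by simp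
    ultimately have "1 / \<epsilon> < R" "0 < R" by linarith+
    then have "1 / R < \<epsilon>" "e \<le> 1 / R" using \<epsilon> e(1) by (simp_all add: field_simps R_def)
    have "(\<lambda>y. y - a) ` ball 0 R \<subseteq> ball 0 (1/e)"
    proof
      fix w assume "w \<in> (\<lambda>y. y - a) ` ball 0 R"
      then obtain y where y: "y \<in> ball 0 R" "w = y - a" by auto
      have "norm w \<le> norm y + norm a" using y(2) norm_triangle_ineq4 by blast
      also have "\<dots> < R + norm a" using y(1) by simp
      finally show "w \<in> ball 0 (1/e)" by (simp add: R_def)
    qed
    then have "patch (translate_tiling (translate_tiling A u) a) (ball 0 R) =
        patch (translate_tiling (translate_tiling B v) a) (ball 0 R)"
      using patch_eq_subset[OF eq] by (simp add: patch_translate_tiling)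
    then have "patch (translate_tiling (translate_tiling A a) u) (ball 0 R) =
        patch (translate_tiling (translate_tiling B a) v) (ball 0 R)"
      by (simp add: translate_tiling_add add.commute)
    then have "tdist (translate_tiling A a) (translate_tiling B a) \<le> 1 / R"
      using \<open>0 < R\<close> \<open>e \<le> 1 / R\<close> e(3,4) by (intro tdist_leI[of "1 / R" u v]) simp_all
    then show ?thesis using \<open>1 / R < \<epsilon>\<close> by simp
  qed
  then show ?thesis using \<epsilon>1pos by blast
qed

lemma tiling_space_translate:
  fixes T :: "'a::euclidean_space set set"
  assumes T': "T' \<in> tiling_space T"
  shows "translate_tiling T' a \<in> tiling_space T"
proof -
  have T'1: "is_tiling T'" and T'2: "\<forall>t\<in>T'. \<exists>s\<in>T. \<exists>x. t = (\<lambda>y. y + x) ` s"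
    and T'3: "\<forall>\<epsilon>>0. \<exists>x. tdist T' (translate_tiling T x) < \<epsilon>"
    using T' unfolding tiling_space_def by auto
  have "\<exists>s\<in>T. \<exists>x. t = (\<lambda>y. y + x) ` s" if t: "t \<in> translate_tiling T' a" for t
  proof -
    obtain t0 where t0: "t0 \<in> T'" "t = (\<lambda>y. y + a) ` t0" using t
      by (auto simp: mem_translate_tiling)
    then obtain s x where "s \<in> T" "t0 = (\<lambda>y. y + x) ` s" using T'2 by blast
    then show ?thesis using t0(2) image_translation_translation by metis
  qed
  moreover have "\<exists>x. tdist (translate_tiling T' a) (translate_tiling T x) < \<epsilon>" if \<epsilon>: "\<epsilon> > 0" for \<epsilon>
  proof -
    obtain e where e: "e > 0" "\<forall>A B. tdist A B < e \<longrightarrow>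
        tdist (translate_tiling A a) (translate_tiling B a) < \<epsilon>"
      using tdist_translate_tiling_small[OF \<epsilon>] by blast
    obtain x where "tdist T' (translate_tiling T x) < e" using T'3 e(1) by blast
    then have "tdist (translate_tiling T' a) (translate_tiling (translate_tiling T x) a) < \<epsilon>"
      using e(2) by blast
    then have "tdist (translate_tiling T' a) (translate_tiling T (x + a)) < \<epsilon>"
      by (simp add: translate_tiling_add)
    then show ?thesis by blast
  qed
  ultimately show ?thesis
    unfolding tiling_space_def mem_Collect_eq using is_tiling_translate[OF T'1] by blast
qed

lemma basis_enum_bij: "bij_betw (basis_enum :: nat \<Rightarrow> 'a) {..<DIM('a::euclidean_space)} Basis"
proof -
  have "\<exists>b. bij_betw b {..<DIM('a)} (Basis::'a set)"
    using ex_bij_betw_nat_finite[of "Basis::'a set"] by (simp add: atLeast0LessThan)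
  then show ?thesis unfolding basis_enum_def by (rule someI_ex)
qed

lemma sum_Basis_basis_enum:
  "(\<Sum>b\<in>(Basis::'a::euclidean_space set). f b) = (\<Sum>i<DIM('a). f (basis_enum i))"
  using sum.reindex_bij_betw[OF basis_enum_bij[where 'a='a], of f] by simp

lemma inner_basis_enum:
  assumes "i < DIM('a)" "j < DIM('a)"
  shows "inner (basis_enum i :: 'a::euclidean_space) (basis_enum j) = (if i = j then 1 else 0)"
proof -
  have "basis_enum i \<in> (Basis :: 'a set)" "basis_enum j \<in> (Basis :: 'a set)"
    using basis_enum_bij[where 'a='a] assms by (auto simp: bij_betw_def)
  moreover have "inj_on (basis_enum :: nat \<Rightarrow> 'a) {..<DIM('a)}"
    using basis_enum_bij[where 'a='a] by (simp add: bij_betw_def)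
  then have "basis_enum i = (basis_enum j :: 'a) \<longleftrightarrow> i = j" using assms by (auto simp: inj_on_def)
  ultimately show ?thesis by (simp add: inner_Basis)
qed

lemma inner_vec_of_basis_enum:
  assumes "i < DIM('a)"
  shows "inner (vec_of x :: 'a::euclidean_space) (basis_enum i) = x i"
proof -
  have "inner (vec_of x :: 'a) (basis_enum i) =
      (\<Sum>j<DIM('a). x j * inner (basis_enum j :: 'a) (basis_enum i))"
    by (simp add: vec_of_def inner_sum_left)
  also have "\<dots> = (\<Sum>j<DIM('a). if j = i then x i else 0)"
    using assms by (intro sum.cong) (auto simp: inner_basis_enum)
  also have "\<dots> = x i" using assms by simp
  finally show ?thesis .
qed

lemma norm_vec_of_diff: "norm (vec_of x - vec_of y :: 'a::euclidean_space) = Rdist DIM('a) x y"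
proof -
  let ?z = "vec_of x - vec_of y :: 'a"
  have "inner ?z ?z = (\<Sum>b\<in>Basis. inner ?z b * inner ?z b)" by (rule euclidean_inner)
  also have "\<dots> = (\<Sum>i<DIM('a). inner ?z (basis_enum i) * inner ?z (basis_enum i))"
    by (rule sum_Basis_basis_enum)
  also have "\<dots> = (\<Sum>i<DIM('a). (x i - y i)\<^sup>2)"
    by (intro sum.cong) (auto simp: inner_diff_left inner_vec_of_basis_enum power2_eq_square)
  finally show ?thesis by (simp add: Rdist_def norm_eq_sqrt_inner)
qed

definition coords :: "'a::euclidean_space \<Rightarrow> nat \<Rightarrow> real" where
  "coords u = (\<lambda>i. if i < DIM('a) then inner u (basis_enum i) else 0)"

lemma coords_in_Rn: "coords (u::'a::euclidean_space) \<in> Rn DIM('a)"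
  by (simp add: coords_def Rn_def)

lemma vec_of_coords: "vec_of (coords u) = (u::'a::euclidean_space)"
proof -
  have "vec_of (coords u) = (\<Sum>i<DIM('a). inner u (basis_enum i) *\<^sub>R (basis_enum i :: 'a))"
    by (simp add: vec_of_def coords_def)
  also have "\<dots> = (\<Sum>b\<in>Basis. inner u b *\<^sub>R b)" by (rule sum_Basis_basis_enum[symmetric])
  also have "\<dots> = u" by (rule euclidean_representation)
  finally show ?thesis .
qed

section \<open>The d_r diffeology is a diffeology containing the translation maps\<close>

definition dr_continuous_near ::
    "nat \<Rightarrow> ((nat \<Rightarrow> real) \<Rightarrow> 'a::euclidean_space set set) \<Rightarrow> (nat \<Rightarrow> real) \<Rightarrow> real \<Rightarrow> bool" where
  "dr_continuous_near n p t0 \<delta> \<longleftrightarrow> (\<forall>r>0. Rcontinuous_on n (Rball n t0 \<delta>) (\<lambda>t. dr r (p t0) (p t)))"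

definition dr_smooth_near :: "nat \<Rightarrow> (nat \<Rightarrow> real) set \<Rightarrow>
    ((nat \<Rightarrow> real) \<Rightarrow> 'a::euclidean_space set set) \<Rightarrow> (nat \<Rightarrow> real) \<Rightarrow> real \<Rightarrow> bool" where
  "dr_smooth_near n U p t0 \<delta> \<longleftrightarrow> (\<forall>t1 \<in> Rball n t0 \<delta> - {t\<in>U. p t = p t0}. \<forall>r>0.
     Rsmooth_at n t0 (Rball n t0 \<delta>) (\<lambda>t. dr r (p t1) (p t)))"

lemma mem_dr_diffeology:
  "(n, U, p) \<in> dr_diffeology T \<longleftrightarrow> is_param (tiling_space T) (n, U, p) \<and>
     (\<forall>t0\<in>U. \<exists>\<delta>>0. Rball n t0 \<delta> \<subseteq> U \<and> dr_continuous_near n p t0 \<delta> \<and> dr_smooth_near n U p t0 \<delta>)"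
  unfolding dr_diffeology_def dr_continuous_near_def dr_smooth_near_def by simp

lemma is_param_iff: "is_param X (n, U, p) \<longleftrightarrow> Ropen n U \<and> p \<in> U \<rightarrow>\<^sub>E X"
  by (simp add: is_param_def)

lemma Rsmooth_at_cong:
  assumes "Rsmooth_at n t0 S f" "\<And>t. t \<in> S \<Longrightarrow> f t = g t"
  shows "Rsmooth_at n t0 S g"
proof -
  obtain V where V: "Ropen n V" "t0 \<in> V" "V \<subseteq> S" "\<forall>t\<in>V. \<bar>f t\<bar> \<noteq> \<infinity>"
    "Rsmooth n V (\<lambda>t. real_of_ereal (f t))" using assms(1) unfolding Rsmooth_at_def by blast
  have "\<forall>t\<in>V. \<bar>g t\<bar> \<noteq> \<infinity>"
  proof
    fix t assume "t \<in> V"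
    then have "f t = g t" "\<bar>f t\<bar> \<noteq> \<infinity>" using V(3,4) assms(2) by auto
    then show "\<bar>g t\<bar> \<noteq> \<infinity>" by simp
  qed
  moreover have "Rsmooth n V (\<lambda>t. real_of_ereal (g t))"
    by (rule Rsmooth_cong[OF V(1) V(5)]) (use V(3) assms(2) in auto)
  ultimately show ?thesis unfolding Rsmooth_at_def using V by blast
qed

lemma Rsmooth_at_Rdist:
  assumes t0: "t0 \<in> Rn n" and t1: "t1 \<in> Rn n" "t1 \<noteq> t0" "t1 \<in> Rball n t0 \<delta>"
  shows "Rsmooth_at n t0 (Rball n t0 \<delta>) (\<lambda>t. ereal (Rdist n t1 t))"
proof -
  let ?V = "Rball n t0 (Rdist n t0 t1)"
  have pos: "0 < Rdist n t1 t" if t: "t \<in> ?V" for t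
  proof -
    have "t1 \<noteq> t" "t \<in> Rn n" using t by (auto simp: Rball_def)
    then show ?thesis using Rdist_pos[OF t1(1)] by blast
  qed
  have "Rsmooth n ?V (\<lambda>t. Rdist n t1 t)" by (rule Rsmooth_Rdist[OF Ropen_Rball pos])
  then have "Rsmooth n ?V (\<lambda>t. real_of_ereal (ereal (Rdist n t1 t)))" by simp
  moreover have "0 < Rdist n t0 t1" using Rdist_pos[OF t0 t1(1)] t1(2) by metis
  then have "t0 \<in> ?V" using t0 unfolding Rball_def by simp
  moreover have "Rdist n t0 t1 < \<delta>" using t1(3) unfolding Rball_def by simp
  then have "?V \<subseteq> Rball n t0 \<delta>" by (intro Rball_mono) simp
  moreover have "\<forall>t\<in>?V. \<bar>ereal (Rdist n t1 t)\<bar> \<noteq> \<infinity>" by simp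
  ultimately show ?thesis unfolding Rsmooth_at_def using Ropen_Rball by blast
qed

lemma Rsmooth_at_compose:
  assumes f: "Rsmooth_at n (g s0) S f" and A: "Ropen m A" "s0 \<in> A"
    and gA: "g ` A \<subseteq> S" "g ` A \<subseteq> Rn n" and g: "\<And>j. j < n \<Longrightarrow> Rsmooth m A (\<lambda>s. g s j)"
  shows "Rsmooth_at m s0 A (\<lambda>s. f (g s))"
proof -
  obtain W where W: "Ropen n W" "g s0 \<in> W" "W \<subseteq> S" "\<forall>t\<in>W. \<bar>f t\<bar> \<noteq> \<infinity>"
    "Rsmooth n W (\<lambda>t. real_of_ereal (f t))" using f unfolding Rsmooth_at_def by blast
  define W' where "W' = {s\<in>A. g s \<in> W}"
  have "Ropen m W'"
    unfolding W'_def by (rule Ropen_preimage[OF A(1) Rsmooth_imp_Rcontinuous_on[OF g] gA(2) W(1)])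
  moreover have "Rsmooth m W' (\<lambda>s. real_of_ereal (f (g s)))"
    by (rule Rsmooth_compose[OF W(1) \<open>Ropen m W'\<close> _ _ W(5)])
      (auto simp: W'_def intro: Rsmooth_subset[OF g])
  moreover have "s0 \<in> W'" "W' \<subseteq> A" "\<forall>s\<in>W'. \<bar>f (g s)\<bar> \<noteq> \<infinity>"
    using A(2) W(2,4) unfolding W'_def by auto
  ultimately show ?thesis unfolding Rsmooth_at_def by blast
qed

lemma dr_diffeology_const:
  assumes "Ropen n U" "c \<in> tiling_space T"
  shows "(n, U, restrict (\<lambda>_. c) U) \<in> dr_diffeology T"
  unfolding mem_dr_diffeology
proof (intro conjI ballI)
  show "is_param (tiling_space T) (n, U, restrict (\<lambda>_. c) U)"
    using assms by (auto simp: is_param_iff)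
  fix t0 assume t0: "t0 \<in> U"
  obtain \<delta> where \<delta>: "\<delta> > 0" "Rball n t0 \<delta> \<subseteq> U" using Ropen_Rball_subset assms(1) t0 by blast
  have "dr_continuous_near n (restrict (\<lambda>_. c) U) t0 \<delta>"
    unfolding dr_continuous_near_def
    using Rcontinuous_on_cong[OF Rcontinuous_on_const[of n _ "dr _ c c"]] \<delta> t0
    by (auto simp: subset_iff)
  moreover have "dr_smooth_near n U (restrict (\<lambda>_. c) U) t0 \<delta>"
    unfolding dr_smooth_near_def using \<delta> t0 by auto
  ultimately show "\<exists>\<delta>>0. Rball n t0 \<delta> \<subseteq> U \<and> dr_continuous_near n (restrict (\<lambda>_. c) U) t0 \<delta> \<and>
      dr_smooth_near n U (restrict (\<lambda>_. c) U) t0 \<delta>"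
    using \<delta> by blast
qed

lemma dr_diffeology_local:
  assumes par: "is_param (tiling_space T) (n, U, p)" and \<V>: "\<Union>\<V> = U"
    and loc: "\<And>V. V \<in> \<V> \<Longrightarrow> (n, V, restrict p V) \<in> dr_diffeology T"
  shows "(n, U, p) \<in> dr_diffeology T"
  unfolding mem_dr_diffeology
proof (intro conjI ballI par)
  fix t0 assume t0: "t0 \<in> U"
  then obtain W where W: "W \<in> \<V>" "t0 \<in> W" using \<V> by blast
  then obtain \<delta> where \<delta>: "\<delta> > 0" "Rball n t0 \<delta> \<subseteq> W" "dr_continuous_near n (restrict p W) t0 \<delta>"
    "dr_smooth_near n W (restrict p W) t0 \<delta>"
    using loc unfolding mem_dr_diffeology by blast
  have WU: "W \<subseteq> U" using W \<V> by blast
  have eq: "restrict p W t = p t" if "t \<in> Rball n t0 \<delta>" for t using that \<delta>(2) by auto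
  have "dr_continuous_near n p t0 \<delta>"
    unfolding dr_continuous_near_def
  proof (intro allI impI)
    fix r :: real assume "r > 0"
    then have "Rcontinuous_on n (Rball n t0 \<delta>) (\<lambda>t. dr r (restrict p W t0) (restrict p W t))"
      using \<delta>(3) unfolding dr_continuous_near_def by blast
    then show "Rcontinuous_on n (Rball n t0 \<delta>) (\<lambda>t. dr r (p t0) (p t))"
      by (rule Rcontinuous_on_cong) (use W(2) eq in simp)
  qed
  moreover have "dr_smooth_near n U p t0 \<delta>"
    unfolding dr_smooth_near_def
  proof (intro ballI allI impI)
    fix t1 r assume t1: "t1 \<in> Rball n t0 \<delta> - {t\<in>U. p t = p t0}" and r: "(r::real) > 0"
    then have "t1 \<in> Rball n t0 \<delta> - {t\<in>W. restrict p W t = restrict p W t0}"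
      using eq \<delta>(1,2) WU W(2) by auto
    then have "Rsmooth_at n t0 (Rball n t0 \<delta>) (\<lambda>t. dr r (restrict p W t1) (restrict p W t))"
      using \<delta>(4) r unfolding dr_smooth_near_def by blast
    then show "Rsmooth_at n t0 (Rball n t0 \<delta>) (\<lambda>t. dr r (p t1) (p t))"
      by (rule Rsmooth_at_cong) (use t1 eq in auto)
  qed
  ultimately show "\<exists>\<delta>>0. Rball n t0 \<delta> \<subseteq> U \<and> dr_continuous_near n p t0 \<delta> \<and> dr_smooth_near n U p t0 \<delta>"
    using \<delta> WU by blast
qed

lemma dr_diffeology_compose:
  assumes P: "(n, U, p) \<in> dr_diffeology T" and V: "Ropen m V"
    and g: "Rsmooth_map m n V g" and gVU: "g ` V \<subseteq> U"
  shows "(m, V, restrict (p \<circ> g) V) \<in> dr_diffeology T"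
  unfolding mem_dr_diffeology
proof (intro conjI ballI)
  let ?q = "restrict (p \<circ> g) V"
  have gRn: "g ` V \<subseteq> Rn n" and gj: "\<And>j. j < n \<Longrightarrow> Rsmooth m V (\<lambda>s. g s j)"
    using g unfolding Rsmooth_map_def by auto
  have gjc: "\<And>j. j < n \<Longrightarrow> Rcontinuous_on m V (\<lambda>s. g s j)"
    using gj Rsmooth_imp_Rcontinuous_on by blast
  have "p \<in> U \<rightarrow>\<^sub>E tiling_space T" using P unfolding mem_dr_diffeology is_param_iff by blast
  then show "is_param (tiling_space T) (m, V, ?q)"
    using V gVU unfolding is_param_iff by (auto simp: PiE_iff)
  fix s0 assume s0: "s0 \<in> V"
  define t0 where "t0 = g s0"
  obtain \<delta> where \<delta>: "\<delta> > 0" "Rball n t0 \<delta> \<subseteq> U" "dr_continuous_near n p t0 \<delta>"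
    "dr_smooth_near n U p t0 \<delta>"
    using P gVU s0 unfolding mem_dr_diffeology t0_def by blast
  let ?B = "Rball n t0 \<delta>"
  have "s0 \<in> {s\<in>V. g s \<in> ?B}" using s0 gRn \<delta>(1) by (auto simp: t0_def Rball_def)
  moreover have "Ropen m {s\<in>V. g s \<in> ?B}" by (rule Ropen_preimage[OF V gjc gRn Ropen_Rball])
  ultimately obtain \<delta>' where \<delta>': "\<delta>' > 0" "Rball m s0 \<delta>' \<subseteq> {s\<in>V. g s \<in> ?B}"
    using Ropen_Rball_subset by blast
  let ?B' = "Rball m s0 \<delta>'"
  have B'V: "?B' \<subseteq> V" and gB': "g ` ?B' \<subseteq> ?B" using \<delta>'(2) by auto
  have qeq: "?q s = p (g s)" if "s \<in> ?B'" for s using that B'V by auto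
  have "dr_continuous_near m ?q s0 \<delta>'"
    unfolding dr_continuous_near_def
  proof (intro allI impI)
    fix r :: real assume r: "r > 0"
    have "Rcontinuous_on m ?B' (\<lambda>s. dr r (p t0) (p (g s)))"
      by (rule Rcontinuous_on_compose[OF _ _ gB'])
        (use \<delta>(3) r gjc B'V in \<open>auto simp: dr_continuous_near_def intro: Rcontinuous_on_subset\<close>)
    then show "Rcontinuous_on m ?B' (\<lambda>s. dr r (?q s0) (?q s))"
      by (rule Rcontinuous_on_cong) (use s0 qeq in \<open>simp add: t0_def\<close>)
  qed
  moreover have "dr_smooth_near m V ?q s0 \<delta>'"
    unfolding dr_smooth_near_def
  proof (intro ballI allI impI)
    fix s1 r assume s1: "s1 \<in> ?B' - {s\<in>V. ?q s = ?q s0}" and r: "(r::real) > 0"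
    then have "g s1 \<in> ?B - {t\<in>U. p t = p t0}"
      using gB' gVU B'V s0 by (auto simp: t0_def)
    then have "Rsmooth_at n (g s0) ?B (\<lambda>t. dr r (p (g s1)) (p t))"
      using \<delta>(4) r unfolding dr_smooth_near_def t0_def by blast
    moreover have "s0 \<in> ?B'" using s0 V \<delta>'(1) Ropen_subset by (auto simp: Rball_def)
    moreover have "g ` ?B' \<subseteq> Rn n" using B'V gRn by blast
    moreover have "Rsmooth m ?B' (\<lambda>s. g s j)" if "j < n" for j
      using gj[OF that] B'V by (rule Rsmooth_subset)
    ultimately have "Rsmooth_at m s0 ?B' (\<lambda>s. dr r (p (g s1)) (p (g s)))"
      using Rsmooth_at_compose[OF _ Ropen_Rball _ gB'] by blast
    then show "Rsmooth_at m s0 ?B' (\<lambda>s. dr r (?q s1) (?q s))"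
      by (rule Rsmooth_at_cong) (use s1 qeq in auto)
  qed
  ultimately show "\<exists>\<delta>>0. Rball m s0 \<delta> \<subseteq> V \<and> dr_continuous_near m ?q s0 \<delta> \<and>
      dr_smooth_near m V ?q s0 \<delta>"
    using \<delta>'(1) B'V by blast
qed

lemma diffeology_dr_diffeology: "diffeology (tiling_space T) (dr_diffeology T)"
  unfolding diffeology_def
proof (intro conjI allI impI ballI)
  show "is_param (tiling_space T) P" if "P \<in> dr_diffeology T" for P
    using that unfolding dr_diffeology_def by auto
next
  fix n U c assume "Ropen n U \<and> c \<in> tiling_space T"
  then show "(n, U, restrict (\<lambda>_. c) U) \<in> dr_diffeology T" by (simp add: dr_diffeology_const)
next
  fix n U p assume "is_param (tiling_space T) (n, U, p) \<and>
    (\<exists>\<V>. (\<forall>V\<in>\<V>. Ropen n V) \<and> \<Union>\<V> = U \<and> (\<forall>V\<in>\<V>. (n, V, restrict p V) \<in> dr_diffeology T))"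
  then obtain \<V> where par: "is_param (tiling_space T) (n, U, p)" and U: "\<Union>\<V> = U"
    and loc: "\<forall>V\<in>\<V>. (n, V, restrict p V) \<in> dr_diffeology T" by blast
  show "(n, U, p) \<in> dr_diffeology T" by (rule dr_diffeology_local[OF par U]) (use loc in blast)
next
  fix n U p m V g
  assume "(n, U, p) \<in> dr_diffeology T \<and> Ropen m V \<and> Rsmooth_map m n V g \<and> g ` V \<subseteq> U"
  then show "(m, V, restrict (p \<circ> g) V) \<in> dr_diffeology T" using dr_diffeology_compose by blast
qed

lemma dr_translate_vec_of:
  assumes g: "translation_gap X \<eta>" and r: "0 \<le> r" and st: "Rdist DIM('a) s t < \<eta>/2"
  shows "dr r (translate_tiling X (vec_of s)) (translate_tiling X (vec_of t :: 'a::euclidean_space))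
    = ereal (Rdist DIM('a) s t)"
proof -
  have "norm (vec_of t - vec_of s :: 'a) = Rdist DIM('a) s t"
    using norm_vec_of_diff[where 'a='a, of t s] Rdist_sym by metis
  then show ?thesis using dr_translate_tiling[OF g r, of "vec_of t" "vec_of s"] st by simp
qed

lemma translation_params_subset_dr_diffeology: "translation_params T \<subseteq> dr_diffeology T"
proof
  fix P assume "P \<in> translation_params T"
  then obtain T1 where T1: "T1 \<in> tiling_space T"
    and P: "P = (DIM('a), Rn DIM('a), restrict (\<lambda>x. translate_tiling T1 (vec_of x)) (Rn DIM('a)))"
    unfolding translation_params_def by blast
  define d where "d = DIM('a)"
  define p where "p = restrict (\<lambda>x. translate_tiling T1 (vec_of x :: 'a)) (Rn d)"
  have "is_tiling T1" using T1 by (simp add: tiling_space_def)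
  then obtain \<eta> where g: "translation_gap T1 \<eta>" using translation_gap_exists by blast
  have \<eta>: "0 < \<eta>" using translation_gap_pos[OF g] .
  have dreq: "dr r (p t1) (p t) = ereal (Rdist d t1 t)"
    if "r > 0" "t1 \<in> Rball d t0 (\<eta>/4)" "t \<in> Rball d t0 (\<eta>/4)" for r t0 t1 t
  proof -
    have "Rdist d t1 t \<le> Rdist d t1 t0 + Rdist d t0 t" by (rule Rdist_triangle)
    also have "\<dots> < \<eta>/2" using that by (simp add: Rball_def Rdist_sym)
    finally show ?thesis
      using that dr_translate_vec_of[OF g, of r t1 t] by (auto simp: p_def d_def Rball_def)
  qed
  have "dr_continuous_near d p t0 (\<eta>/4) \<and> dr_smooth_near d (Rn d) p t0 (\<eta>/4)"
    if t0: "t0 \<in> Rn d" for t0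
  proof
    let ?B = "Rball d t0 (\<eta>/4)"
    have t0B: "t0 \<in> ?B" using t0 \<eta> by (simp add: Rball_def)
    show "dr_continuous_near d p t0 (\<eta>/4)"
      unfolding dr_continuous_near_def
    proof (intro allI impI)
      fix r :: real assume r: "r > 0"
      show "Rcontinuous_on d ?B (\<lambda>t. dr r (p t0) (p t))"
        by (rule Rcontinuous_on_cong[OF Rcontinuous_on_ereal[OF Rcontinuous_on_Rdist]])
          (simp add: dreq[OF r t0B])
    qed
    show "dr_smooth_near d (Rn d) p t0 (\<eta>/4)"
      unfolding dr_smooth_near_def
    proof (intro ballI allI impI)
      fix t1 r assume t1: "t1 \<in> ?B - {t \<in> Rn d. p t = p t0}" and r: "(r::real) > 0"
      then have t1B: "t1 \<in> ?B" and t1R: "t1 \<in> Rn d" and ne: "t1 \<noteq> t0" using t0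
        by (auto simp: Rball_def)
      have "Rsmooth_at d t0 ?B (\<lambda>t. ereal (Rdist d t1 t))"
        by (rule Rsmooth_at_Rdist[OF t0 t1R ne t1B])
      then show "Rsmooth_at d t0 ?B (\<lambda>t. dr r (p t1) (p t))"
        by (rule Rsmooth_at_cong) (simp add: dreq[OF r t1B])
    qed
  qed
  moreover have "is_param (tiling_space T) (d, Rn d, p)"
    unfolding is_param_iff p_def using Ropen_Rn tiling_space_translate[OF T1] by auto
  ultimately have "(d, Rn d, p) \<in> dr_diffeology T"
    unfolding mem_dr_diffeology using \<eta> Rball_subset_Rn[of d _ "\<eta>/4"]
    by (intro conjI ballI exI[of _ "\<eta>/4"]) auto
  then show "P \<in> dr_diffeology T" by (simp add: P p_def d_def)
qed

lemma generated_diffeology_subset_dr_diffeology: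
  "generated_diffeology (tiling_space T) (translation_params T) \<subseteq> dr_diffeology T"
  unfolding generated_diffeology_def
  using diffeology_dr_diffeology translation_params_subset_dr_diffeology by blast

section \<open>Elements of the d_r diffeology are locally translations\<close>

definition Rseg :: "(nat \<Rightarrow> real) \<Rightarrow> (nat \<Rightarrow> real) \<Rightarrow> real \<Rightarrow> nat \<Rightarrow> real" where
  "Rseg t0 t l = (\<lambda>j. t0 j + l * (t j - t0 j))"

lemma Rseg_0[simp]: "Rseg t0 t 0 = t0"
  by (simp add: Rseg_def)

lemma Rseg_1[simp]: "Rseg t0 t 1 = t"
  by (simp add: Rseg_def)

lemma Rdist_Rseg: "Rdist n (Rseg t0 t a) (Rseg t0 t b) = \<bar>a - b\<bar> * Rdist n t0 t"
proof -
  have "(\<Sum>j<n. (Rseg t0 t a j - Rseg t0 t b j)\<^sup>2) = (a - b)\<^sup>2 * (\<Sum>j<n. (t0 j - t j)\<^sup>2)"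
    unfolding sum_distrib_left
    by (intro sum.cong) (auto simp: Rseg_def power2_eq_square algebra_simps)
  then show ?thesis by (simp add: Rdist_def real_sqrt_mult)
qed

lemma Rseg_in_Rball:
  assumes "t0 \<in> Rn n" "t \<in> Rball n t0 \<delta>" "l \<in> {0..1}"
  shows "Rseg t0 t l \<in> Rball n t0 \<delta>"
proof -
  have "Rdist n t0 (Rseg t0 t l) = \<bar>0 - l\<bar> * Rdist n t0 t"
    using Rdist_Rseg[of n t0 t 0 l] by simp
  also have "\<dots> \<le> Rdist n t0 t" using assms(3) by (simp add: mult_left_le_one_le)
  finally show ?thesis using assms by (auto simp: Rball_def Rseg_def Rn_def)
qed

lemma continuous_on_Rseg_compose:
  assumes f: "Rcontinuous_on n S f" and inS: "\<And>l. l \<in> {0..1} \<Longrightarrow> Rseg t0 t l \<in> S"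
  shows "continuous_on {0..1} (\<lambda>l. f (Rseg t0 t l))"
  unfolding continuous_on_def
proof
  fix x :: real assume x: "x \<in> {0..1}"
  have "filterlim (Rseg t0 t) (Rnhds n S (Rseg t0 t x)) (at x within {0..1})"
    unfolding filterlim_def le_filter_def eventually_filtermap
  proof (intro allI impI)
    fix P assume "eventually P (Rnhds n S (Rseg t0 t x))"
    then obtain e where e: "e > 0" "\<forall>y\<in>S. Rdist n (Rseg t0 t x) y < e \<longrightarrow> P y"
      unfolding eventually_Rnhds by blast
    define R where "R = Rdist n t0 t"
    have R: "0 \<le> R" by (simp add: R_def)
    show "eventually (\<lambda>y. P (Rseg t0 t y)) (at x within {0..1})"
      unfolding eventually_at
    proof (intro exI[of _ "e / (R + 1)"] conjI ballI impI)
      show "0 < e / (R + 1)" using e R by simp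
      fix y assume y: "y \<in> {0..1}" "y \<noteq> x \<and> dist y x < e / (R + 1)"
      have "Rdist n (Rseg t0 t x) (Rseg t0 t y) = \<bar>x - y\<bar> * R" by (simp add: Rdist_Rseg R_def)
      also have "\<dots> \<le> \<bar>x - y\<bar> * (R + 1)" by (simp add: mult_left_mono)
      also have "\<dots> < e" using y R by (simp add: dist_real_def abs_minus_commute field_simps)
      finally show "P (Rseg t0 t y)" using e inS[OF y(1)] by blast
    qed
  qed
  then show "((\<lambda>l. f (Rseg t0 t l)) \<longlongrightarrow> f (Rseg t0 t x)) (at x within {0..1})"
    using Rcontinuous_onD[OF f inS[OF x]] by (rule filterlim_compose[rotated])
qed

lemma continuous_on_ereal_stays_below:
  fixes f :: "real \<Rightarrow> ereal"
  assumes cont: "continuous_on {0..1} f"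
    and gap: "\<And>l. l \<in> {0..1} \<Longrightarrow> f l < ereal a \<or> ereal b < f l"
    and ab: "a \<le> b" and f0: "f 0 < ereal a"
  shows "f 1 < ereal a"
proof -
  have conn: "connected (f ` {0..1})" by (rule connected_continuous_image[OF cont connected_Icc])
  have "{..< ereal a} \<inter> {ereal b <..} = {}"
  proof (rule ccontr)
    assume "{..< ereal a} \<inter> {ereal b <..} \<noteq> {}"
    then obtain z where "z < ereal a" "ereal b < z" by auto
    then have "ereal b < ereal a" by (rule less_trans[rotated])
    then show False using ab by simp
  qed
  then have "{..< ereal a} \<inter> {ereal b <..} \<inter> f ` {0..1} = {}" by blast
  moreover have "f ` {0..1} \<subseteq> {..< ereal a} \<union> {ereal b <..}" using gap by fastforce
  ultimately have "{..< ereal a} \<inter> f ` {0..1} = {} \<or> {ereal b <..} \<inter> f ` {0..1} = {}"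
    using connectedD[OF conn open_lessThan open_greaterThan] by blast
  moreover have "f 0 \<in> {..< ereal a} \<inter> f ` {0..1}" using f0 by auto
  ultimately have "{ereal b <..} \<inter> f ` {0..1} = {}" by blast
  then have "\<not> ereal b < f 1" by auto
  then show ?thesis using gap[of 1] by auto
qed

text \<open>A translation matching Y near the origin up to eta/4 is unique within the gap, so a
  match of a larger patch is either that one (d_r below eta/4) or far away.\<close>

lemma dr_dichotomy:
  assumes g: "translation_gap X \<eta>" and u: "norm u < \<eta>/4"
    and u1: "patch (translate_tiling X u) (cball 0 1) = patch Y (cball 0 1)" and r: "1 \<le> r"
  shows "dr r X Y < ereal (\<eta>/4) \<or> ereal (\<eta>/2) < dr r X Y"
proof (cases "dr r X Y < ereal (3*\<eta>/4)")
  case True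
  then obtain u' where u': "norm u' < 3*\<eta>/4"
    "patch (translate_tiling X u') (cball 0 r) = patch Y (cball 0 r)"
    using dr_less_ereal_D by blast
  have "patch (translate_tiling X u') (cball 0 1) = patch Y (cball 0 1)"
    by (rule patch_eq_subset[OF u'(2)]) (use r in auto)
  then have "patch (translate_tiling X u') (cball 0 1) = patch (translate_tiling X u) (cball 0 1)"
    using u1 by simp
  then have "u' = u" by (rule translation_gap_unique[OF g zero_le_one]) (use u u'(1) in linarith)
  then have "dr r X Y \<le> ereal ((norm u + \<eta>/4)/2)"
    using u u'(2) by (intro dr_le_ereal_I) auto
  also have "\<dots> < ereal (\<eta>/4)" using u by simp
  finally show ?thesis by simp
next
  case False
  then have "ereal (3*\<eta>/4) \<le> dr r X Y" by simp
  moreover have "ereal (\<eta>/2) < ereal (3*\<eta>/4)" using translation_gap_pos[OF g] by simp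
  ultimately show ?thesis by (meson less_le_trans)
qed

lemma eq_translate_tiling_if_dr_less:
  assumes X: "is_tiling X" and Y: "is_tiling Y" and g: "translation_gap X \<eta>"
    and small: "\<And>r. 1 \<le> r \<Longrightarrow> dr r X Y < ereal (\<eta>/4)"
  shows "\<exists>u. norm u < \<eta>/4 \<and> Y = translate_tiling X u"
proof -
  obtain u where u: "norm u < \<eta>/4" "patch (translate_tiling X u) (cball 0 1) = patch Y (cball 0 1)"
    using dr_less_ereal_D[OF small] by auto
  have eq: "patch (translate_tiling X u) (cball 0 r) = patch Y (cball 0 r)" if r: "1 \<le> r" for r
  proof -
    obtain u' where u': "norm u' < \<eta>/4"
      "patch (translate_tiling X u') (cball 0 r) = patch Y (cball 0 r)"
      using dr_less_ereal_D[OF small[OF r]] by blast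
    have "patch (translate_tiling X u') (cball 0 1) = patch Y (cball 0 1)"
      by (rule patch_eq_subset[OF u'(2)]) (use r in auto)
    then have "patch (translate_tiling X u') (cball 0 1) = patch (translate_tiling X u) (cball 0 1)"
      using u(2) by simp
    then have "u' = u"
      by (rule translation_gap_unique[OF g zero_le_one])
        (use u(1) u'(1) translation_gap_pos[OF g] in linarith)
    then show ?thesis using u'(2) by simp
  qed
  have "translate_tiling X u = Y" by (rule tiling_eqI_patches[OF is_tiling_translate[OF X] Y eq])
  then show ?thesis using u(1) by blast
qed

text \<open>Along the segment from t0 to t, d_r(X, Y l) starts at 0 and never enters
  [eta/4, eta/2] (lemma dr_dichotomy), so by connectedness it stays below eta/4.\<close>

lemma dr_less_on_Rball:
  assumes g: "translation_gap X \<eta>" and X: "is_tiling X" and t0: "t0 \<in> Rn n" and Y0: "Y t0 = X"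
    and cont: "\<And>r. r > 0 \<Longrightarrow> Rcontinuous_on n (Rball n t0 \<delta>) (\<lambda>t. dr r X (Y t))"
    and dr1: "\<And>t. t \<in> Rball n t0 \<delta> \<Longrightarrow> dr 1 X (Y t) < ereal (\<eta>/4)"
    and t: "t \<in> Rball n t0 \<delta>" and r: "1 \<le> r"
  shows "dr r X (Y t) < ereal (\<eta>/4)"
proof -
  have seg: "Rseg t0 t l \<in> Rball n t0 \<delta>" if "l \<in> {0..1}" for l using Rseg_in_Rball[OF t0 t that] .
  have "continuous_on {0..1} (\<lambda>l. dr r X (Y (Rseg t0 t l)))"
    using cont[of r] r by (intro continuous_on_Rseg_compose[OF _ seg]) auto
  moreover have "dr r X (Y (Rseg t0 t l)) < ereal (\<eta>/4) \<or> ereal (\<eta>/2) < dr r X (Y (Rseg t0 t l))"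
    if "l \<in> {0..1}" for l
    using dr_less_ereal_D[OF dr1[OF seg[OF that]]] dr_dichotomy[OF g _ _ r] by blast
  ultimately show ?thesis
    using continuous_on_ereal_stays_below[of "\<lambda>l. dr r X (Y (Rseg t0 t l))" "\<eta>/4" "\<eta>/2"]
      dr_self[OF X] translation_gap_pos[OF g] r Y0 by (simp add: zero_ereal_def)
qed

text \<open>Clause (1) makes d_1(p t0, p t) < eta/4 near t0, lemma dr_less_on_Rball extends this
  to every d_r with r \<ge> 1, and then p t is a short translate of p t0.\<close>

lemma dr_diffeology_locally_translate:
  assumes P: "(n, U, p) \<in> dr_diffeology T" and t0: "t0 \<in> U"
  shows "\<exists>\<eta> \<delta> u. translation_gap (p t0) \<eta> \<and> 0 < \<delta> \<and> Rball n t0 \<delta> \<subseteq> U \<and>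
     (\<forall>t\<in>Rball n t0 \<delta>. p t = translate_tiling (p t0) (u t) \<and> norm (u t) < \<eta>/4) \<and>
     (\<forall>\<epsilon>>0. \<exists>e>0. \<forall>t\<in>Rball n t0 \<delta>. Rdist n t0 t < e \<longrightarrow> norm (u t) < \<epsilon>)"
proof -
  define p0 where "p0 = p t0"
  have Uo: "Ropen n U" and ptil: "\<And>t. t \<in> U \<Longrightarrow> is_tiling (p t)"
    using P unfolding mem_dr_diffeology is_param_iff tiling_space_def by auto
  have p0t: "is_tiling p0" using ptil t0 p0_def by simp
  obtain \<eta> where g: "translation_gap p0 \<eta>" using translation_gap_exists[OF p0t] by blast
  have \<eta>: "0 < \<eta>" using translation_gap_pos[OF g] .
  obtain \<delta> where \<delta>: "\<delta> > 0" "Rball n t0 \<delta> \<subseteq> U" "dr_continuous_near n p t0 \<delta>"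
    using P t0 unfolding mem_dr_diffeology by blast
  let ?B = "Rball n t0 \<delta>"
  have t0R: "t0 \<in> Rn n" using t0 Uo Ropen_subset by blast
  have t0B: "t0 \<in> ?B" using t0R \<delta>(1) by (simp add: Rball_def)
  have cont: "\<And>r. r > 0 \<Longrightarrow> Rcontinuous_on n ?B (\<lambda>t. dr r p0 (p t))"
    using \<delta>(3) unfolding dr_continuous_near_def p0_def by blast
  have near0: "\<exists>e>0. \<forall>t\<in>?B. Rdist n t0 t < e \<longrightarrow> dr r p0 (p t) < ereal \<epsilon>"
    if "r > 0" "\<epsilon> > 0" for r \<epsilon>
    using Rcontinuous_on_less[OF cont t0B, of r "ereal \<epsilon>"] dr_self[OF p0t, of r] that
    by (simp add: p0_def zero_ereal_def)
  obtain e where e: "e > 0" "\<forall>t\<in>?B. Rdist n t0 t < e \<longrightarrow> dr 1 p0 (p t) < ereal (\<eta>/4)"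
    using near0[of 1 "\<eta>/4"] \<eta> by auto
  define \<delta>1 where "\<delta>1 = min \<delta> e"
  let ?B1 = "Rball n t0 \<delta>1"
  have B1B: "?B1 \<subseteq> ?B" using Rball_mono[of \<delta>1 \<delta>] by (simp add: \<delta>1_def)
  have dr1: "dr 1 p0 (p t) < ereal (\<eta>/4)" if "t \<in> ?B1" for t
    using e(2) that B1B by (auto simp: \<delta>1_def Rball_def)
  have small: "dr r p0 (p t) < ereal (\<eta>/4)" if t: "t \<in> ?B1" and r: "1 \<le> r" for t r
    using dr_less_on_Rball[OF g p0t t0R _ Rcontinuous_on_subset[OF cont B1B] dr1 t r] p0_def by simp
  define u where "u t = (SOME u. norm u < \<eta>/4 \<and> p t = translate_tiling p0 u)" for t
  have u: "norm (u t) < \<eta>/4 \<and> p t = translate_tiling p0 (u t)" if t: "t \<in> ?B1" for t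
  proof -
    have "t \<in> U" using t B1B \<delta>(2) by blast
    then have "\<exists>u. norm u < \<eta>/4 \<and> p t = translate_tiling p0 u"
      using eq_translate_tiling_if_dr_less[OF p0t ptil g small[OF t]] by blast
    then show ?thesis unfolding u_def by (rule someI_ex)
  qed
  have dru: "dr 1 p0 (p t) = ereal (norm (u t))" if t: "t \<in> ?B1" for t
    using dr_translate_tiling[OF g, of 1 "u t" 0] u[OF t] \<eta> by simp
  have "\<exists>e>0. \<forall>t\<in>?B1. Rdist n t0 t < e \<longrightarrow> norm (u t) < \<epsilon>" if \<epsilon>: "\<epsilon> > 0" for \<epsilon>
  proof -
    obtain e where "e > 0" "\<forall>t\<in>?B. Rdist n t0 t < e \<longrightarrow> dr 1 p0 (p t) < ereal \<epsilon>"
      using near0[of 1 \<epsilon>] \<epsilon> by auto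
    then show ?thesis using B1B dru by (intro exI[of _ e]) auto
  qed
  moreover have "0 < \<delta>1" "?B1 \<subseteq> U" using \<delta> e(1) B1B by (auto simp: \<delta>1_def)
  ultimately show ?thesis using g u unfolding p0_def by blast
qed

lemma mem_span_differences:
  fixes S :: "'a::euclidean_space set"
  assumes small: "\<And>\<epsilon>. \<epsilon> > 0 \<Longrightarrow> \<exists>s\<in>S. norm s < \<epsilon>" and a: "a \<in> S"
  shows "a \<in> span {x - y | x y. x \<in> S \<and> y \<in> S}"
proof -
  have "\<exists>z\<in>span {x - y | x y. x \<in> S \<and> y \<in> S}. dist z a < \<epsilon>" if \<epsilon>: "\<epsilon> > 0" for \<epsilon>
  proof -
    obtain s where "s \<in> S" "norm s < \<epsilon>" using small[OF \<epsilon>] by blast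
    then have "a - s \<in> span {x - y | x y. x \<in> S \<and> y \<in> S}" "dist (a - s) a < \<epsilon>"
      using a by (auto simp: dist_norm intro: span_base)
    then show ?thesis by blast
  qed
  then show ?thesis using closed_approachable[OF closed_subspace[OF subspace_span]] by blast
qed

lemma subspace_Rsmooth_inner: "subspace {v. Rsmooth n V (\<lambda>t. inner (u t) v)}"
  unfolding subspace_def
  by (auto simp: inner_add_right Rsmooth_const intro: Rsmooth_add Rsmooth_cmult)

lemma Rsmooth_inner_diff:
  assumes V: "Ropen n V"
    and a: "Rsmooth n V (\<lambda>t. (norm (u t - a))\<^sup>2)" and b: "Rsmooth n V (\<lambda>t. (norm (u t - b))\<^sup>2)"
  shows "Rsmooth n V (\<lambda>t. inner (u t) (a - b :: 'a::real_inner))"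
proof -
  have polar: "inner x (a - b) =
      ((norm (x - b))\<^sup>2 - (norm (x - a))\<^sup>2 + (norm a)\<^sup>2 - (norm b)\<^sup>2) / 2" for x
    by (simp add: power2_norm_eq_inner inner_diff_left inner_diff_right inner_commute)
  have "Rsmooth n V (\<lambda>t. (1/2) *
      (((norm (u t - b))\<^sup>2 - (norm (u t - a))\<^sup>2) + ((norm a)\<^sup>2 - (norm b)\<^sup>2)))"
    by (intro Rsmooth_cmult Rsmooth_add Rsmooth_diff b a Rsmooth_const)
  then show ?thesis by (rule Rsmooth_cong[OF V]) (simp add: polar)
qed

lemma Rsmooth_inner_if_span:
  assumes V: "Ropen n V" and uB: "\<And>t. t \<in> V \<Longrightarrow> u t \<in> span B"
    and B: "\<And>b. b \<in> B \<Longrightarrow> Rsmooth n V (\<lambda>t. inner (u t) b)"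
  shows "Rsmooth n V (\<lambda>t. inner (u t) (v::'a::euclidean_space))"
proof -
  obtain y z where yz: "y \<in> span B" "\<And>w. w \<in> span B \<Longrightarrow> orthogonal z w" "v = y + z"
    using orthogonal_subspace_decomp_exists[of B v] by blast
  have "span B \<subseteq> {v. Rsmooth n V (\<lambda>t. inner (u t) v)}"
    using B by (intro span_minimal subspace_Rsmooth_inner) auto
  then have "Rsmooth n V (\<lambda>t. inner (u t) y)" using yz(1) by blast
  moreover have "inner (u t) y = inner (u t) v" if "t \<in> V" for t
    using yz(2)[OF uB[OF that]] yz(3) by (simp add: orthogonal_def inner_commute inner_add_right)
  ultimately show ?thesis by (rule Rsmooth_cong[OF V])
qed

text \<open>Finitely many of the differences span, and the inner products of u t with them are smooth
  by polarization.\<close>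

lemma Rsmooth_coords_from_sq_dists:
  fixes u :: "(nat \<Rightarrow> real) \<Rightarrow> 'a::euclidean_space"
  assumes \<rho>0: "0 < \<rho>0" and uD: "\<And>t. t \<in> Rball n t0 \<rho>0 \<Longrightarrow> u t \<in> span {a - b | a b. a \<in> S \<and> b \<in> S}"
    and sq: "\<And>a. a \<in> S \<Longrightarrow> \<exists>\<rho>>0. Rsmooth n (Rball n t0 \<rho>) (\<lambda>t. (norm (u t - a))\<^sup>2)"
  shows "\<exists>\<rho>>0. \<rho> \<le> \<rho>0 \<and> (\<forall>i. Rsmooth n (Rball n t0 \<rho>) (\<lambda>t. coords (u t) i))"
proof -
  define D where "D = {a - b | a b. a \<in> S \<and> b \<in> S}"
  obtain Bs where Bs: "Bs \<subseteq> D" "independent Bs" "D \<subseteq> span Bs"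
    by (rule maximal_independent_subset)
  have finBs: "finite Bs" using independent_bound[OF Bs(2)] by blast
  have "\<forall>w\<in>Bs. \<exists>ab. fst ab \<in> S \<and> snd ab \<in> S \<and> w = fst ab - snd ab"
    using Bs(1) unfolding D_def by fastforce
  then obtain ab where ab0: "\<forall>w\<in>Bs. fst (ab w) \<in> S \<and> snd (ab w) \<in> S \<and> w = fst (ab w) - snd (ab w)"
    by (rule bchoice[elim_format]) blast
  define a where "a w = fst (ab w)" for w
  define b where "b w = snd (ab w)" for w
  have ab: "a w \<in> S \<and> b w \<in> S \<and> w = a w - b w" if "w \<in> Bs" for w
    using ab0 that unfolding a_def b_def by blast
  obtain \<rho>f where \<rho>f:
    "\<And>c. c \<in> S \<Longrightarrow> \<rho>f c > 0 \<and> Rsmooth n (Rball n t0 (\<rho>f c)) (\<lambda>t. (norm (u t - c))\<^sup>2)"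
    using sq by (metis (mono_tags))
  define \<rho> where "\<rho> = Min (insert \<rho>0 (\<rho>f ` (a ` Bs \<union> b ` Bs)))"
  have fin: "finite (insert \<rho>0 (\<rho>f ` (a ` Bs \<union> b ` Bs)))" using finBs by simp
  have "0 < \<rho>" unfolding \<rho>_def using fin \<rho>0 ab \<rho>f by (subst Min_gr_iff) auto
  moreover have "\<rho> \<le> \<rho>0" unfolding \<rho>_def using fin by simp
  ultimately have \<rho>: "0 < \<rho>" "\<rho> \<le> \<rho>0" by blast+
  let ?V = "Rball n t0 \<rho>"
  have sqV: "Rsmooth n ?V (\<lambda>t. (norm (u t - c))\<^sup>2)" if "c \<in> a ` Bs \<union> b ` Bs" for c
  proof -
    have "c \<in> S" using that ab by auto
    moreover have "\<rho> \<le> \<rho>f c" unfolding \<rho>_def using fin that by simp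
    ultimately show ?thesis using \<rho>f Rsmooth_subset[OF _ Rball_mono] by blast
  qed
  have inner_Bs: "Rsmooth n ?V (\<lambda>t. inner (u t) w)" if "w \<in> Bs" for w
  proof -
    have "Rsmooth n ?V (\<lambda>t. inner (u t) (a w - b w))"
      using that by (intro Rsmooth_inner_diff[OF Ropen_Rball sqV sqV]) auto
    then show ?thesis using ab[OF that] by simp
  qed
  have span_Bs: "u t \<in> span Bs" if "t \<in> ?V" for t
  proof -
    have "t \<in> Rball n t0 \<rho>0" using that Rball_mono[OF \<rho>(2)] by blast
    then have "u t \<in> span D" using uD unfolding D_def by blast
    then show ?thesis using span_mono[OF Bs(3)] by (auto simp: span_span)
  qed
  have "Rsmooth n ?V (\<lambda>t. inner (u t) v)" for v
    by (rule Rsmooth_inner_if_span[OF Ropen_Rball span_Bs inner_Bs])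
  then have "Rsmooth n ?V (\<lambda>t. coords (u t) i)" for i
    by (cases "i < DIM('a)") (simp_all add: coords_def Rsmooth_const)
  then show ?thesis using \<rho> by blast
qed

lemma translate_tiling_eq_self_iff:
  assumes g: "translation_gap X \<eta>" and u: "norm u < \<eta>"
  shows "translate_tiling X u = X \<longleftrightarrow> u = 0"
proof
  assume "translate_tiling X u = X"
  then have "patch (translate_tiling X u) (cball 0 0) = patch (translate_tiling X 0) (cball 0 0)"
    by simp
  then show "u = 0" using translation_gap_unique[OF g order_refl] u by simp
qed simp

text \<open>Near t0, d_1(p t1, p t) = norm (u t - u t1) by lemma dr_translate_tiling.\<close>

lemma Rsmooth_sq_dist_translation:
  assumes g: "translation_gap X \<eta>" and t0: "t0 \<in> Rball n t0 \<delta>"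
    and pu: "\<And>t. t \<in> Rball n t0 \<delta> \<Longrightarrow> p t = translate_tiling X (u t) \<and> norm (u t) < \<eta>/4"
    and t1: "t1 \<in> Rball n t0 \<delta>" and sm: "Rsmooth_at n t0 S (\<lambda>t. dr 1 (p t1) (p t))"
  shows "\<exists>\<rho>>0. Rsmooth n (Rball n t0 \<rho>) (\<lambda>t. (norm (u t - u t1))\<^sup>2)"
proof -
  obtain W where W: "Ropen n W" "t0 \<in> W" "Rsmooth n W (\<lambda>t. real_of_ereal (dr 1 (p t1) (p t)))"
    using sm unfolding Rsmooth_at_def by blast
  obtain \<rho> where \<rho>: "\<rho> > 0" "Rball n t0 \<rho> \<subseteq> W \<inter> Rball n t0 \<delta>"
    using Ropen_Rball_subset[OF Ropen_Int[OF W(1) Ropen_Rball]] W(2) t0 by blast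
  have dr_eq: "real_of_ereal (dr 1 (p t1) (p t)) = norm (u t - u t1)" if t: "t \<in> Rball n t0 \<rho>" for t
  proof -
    have "t \<in> Rball n t0 \<delta>" using t \<rho>(2) by blast
    then have pt: "p t = translate_tiling X (u t)" "p t1 = translate_tiling X (u t1)"
      and "norm (u t) < \<eta>/4" "norm (u t1) < \<eta>/4"
      using pu t1 by blast+
    then have "norm (u t - u t1) < \<eta>/2"
      using norm_triangle_ineq4[of "u t" "u t1"] by linarith
    then show ?thesis using dr_translate_tiling[OF g zero_le_one] pt by simp
  qed
  have "Rsmooth n (Rball n t0 \<rho>) (\<lambda>t. real_of_ereal (dr 1 (p t1) (p t)))"
    using Rsmooth_subset[OF W(3)] \<rho>(2) by blast
  then have nrm: "Rsmooth n (Rball n t0 \<rho>) (\<lambda>t. norm (u t - u t1))"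
    by (rule Rsmooth_cong[OF Ropen_Rball]) (rule dr_eq)
  have "Rsmooth n (Rball n t0 \<rho>) (\<lambda>t. (norm (u t - u t1))\<^sup>2)"
    using Rsmooth_mult[OF nrm nrm] by (simp add: power2_eq_square)
  then show ?thesis using \<rho>(1) by blast
qed

text \<open>The values u t1 \<noteq> 0 accumulate at 0 unless u vanishes near t0, so their differences
  span all values of u, and clause (2) makes the distances to them smooth.\<close>

lemma dr_diffeology_locally_smooth_translate:
  fixes T :: "'a::euclidean_space set set"
  assumes P: "(n, U, p) \<in> dr_diffeology T" and t0: "t0 \<in> U"
  shows "\<exists>V g. Ropen n V \<and> t0 \<in> V \<and> V \<subseteq> U \<and> Rsmooth_map n DIM('a) V g \<and>
           (\<forall>t\<in>V. p t = translate_tiling (p t0) (vec_of (g t)))"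
proof -
  obtain \<eta> \<delta> u where g: "translation_gap (p t0) \<eta>" and \<delta>: "0 < \<delta>" "Rball n t0 \<delta> \<subseteq> U"
    and pu: "\<forall>t\<in>Rball n t0 \<delta>. p t = translate_tiling (p t0) (u t) \<and> norm (u t) < \<eta>/4"
    and ucont: "\<forall>\<epsilon>>0. \<exists>e>0. \<forall>t\<in>Rball n t0 \<delta>. Rdist n t0 t < e \<longrightarrow> norm (u t) < \<epsilon>"
    using dr_diffeology_locally_translate[OF P t0] by blast
  obtain \<delta>' where \<delta>': "\<delta>' > 0" "dr_smooth_near n U p t0 \<delta>'"
    using P t0 unfolding mem_dr_diffeology by blast
  have t0R: "t0 \<in> Rn n" using P t0 Ropen_subset unfolding mem_dr_diffeology is_param_iff by blast
  define \<delta>1 where "\<delta>1 = min \<delta> \<delta>'"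
  let ?B1 = "Rball n t0 \<delta>1"
  have B1: "0 < \<delta>1" "?B1 \<subseteq> Rball n t0 \<delta>" "?B1 \<subseteq> Rball n t0 \<delta>'" "t0 \<in> ?B1"
    using \<delta> \<delta>' t0R by (auto simp: \<delta>1_def Rball_def)
  define S where "S = u ` {t\<in>?B1. u t \<noteq> 0}"
  obtain \<rho>0 where \<rho>0: "0 < \<rho>0" "\<rho>0 \<le> \<delta>1"
    "\<And>t. t \<in> Rball n t0 \<rho>0 \<Longrightarrow> u t \<in> span {a - b | a b. a \<in> S \<and> b \<in> S}"
  proof (cases "\<exists>e>0. \<forall>t\<in>?B1. Rdist n t0 t < e \<longrightarrow> u t = 0")
    case True
    then obtain e where e: "e > 0" "\<forall>t\<in>?B1. Rdist n t0 t < e \<longrightarrow> u t = 0" by blast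
    have "u t = 0" if "t \<in> Rball n t0 (min e \<delta>1)" for t
      using e(2) that by (auto simp: Rball_def)
    then show ?thesis using that[of "min e \<delta>1"] e(1) B1(1) by (simp add: span_zero)
  next
    case False
    have S0: "\<exists>s\<in>S. norm s < \<epsilon>" if \<epsilon>: "\<epsilon> > 0" for \<epsilon>
    proof -
      obtain e where "e > 0" "\<forall>t\<in>Rball n t0 \<delta>. Rdist n t0 t < e \<longrightarrow> norm (u t) < \<epsilon>"
        using ucont \<epsilon> by blast
      moreover obtain t where "t \<in> ?B1" "Rdist n t0 t < e" "u t \<noteq> 0" using False \<open>e > 0\<close> by blast
      ultimately show ?thesis using B1(2) by (auto simp: S_def)
    qed
    have "u t \<in> span {a - b | a b. a \<in> S \<and> b \<in> S}" if "t \<in> ?B1" for t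
      using that mem_span_differences[OF S0] by (cases "u t = 0") (auto simp: S_def span_zero)
    then show ?thesis using that[of \<delta>1] B1(1) by blast
  qed
  moreover have "\<exists>\<rho>>0. Rsmooth n (Rball n t0 \<rho>) (\<lambda>t. (norm (u t - a))\<^sup>2)" if "a \<in> S" for a
  proof -
    obtain t1 where t1: "t1 \<in> ?B1" "u t1 \<noteq> 0" "a = u t1" using \<open>a \<in> S\<close> S_def by blast
    moreover have "norm (u t1) < \<eta>" using pu t1(1) B1(2) translation_gap_pos[OF g] by fastforce
    ultimately have "t1 \<in> Rball n t0 \<delta>' - {t\<in>U. p t = p t0}"
      using pu B1(2,3) translate_tiling_eq_self_iff[OF g] by auto
    then have sm: "Rsmooth_at n t0 (Rball n t0 \<delta>') (\<lambda>t. dr 1 (p t1) (p t))"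
      using \<delta>'(2) unfolding dr_smooth_near_def by simp
    show ?thesis
      using Rsmooth_sq_dist_translation[OF g _ _ _ sm, of \<delta>] pu B1 t1 by blast
  qed
  ultimately obtain \<rho> where \<rho>: "0 < \<rho>" "\<rho> \<le> \<delta>1" "\<And>i. Rsmooth n (Rball n t0 \<rho>) (\<lambda>t. coords (u t) i)"
    using Rsmooth_coords_from_sq_dists[of \<rho>0 n t0 u S] by fastforce
  let ?V = "Rball n t0 \<rho>"
  have VB1: "?V \<subseteq> ?B1" by (rule Rball_mono[OF \<rho>(2)])
  have "Rsmooth_map n DIM('a) ?V (\<lambda>t. coords (u t))"
    unfolding Rsmooth_map_def using \<rho>(3) coords_in_Rn by blast
  moreover have "p t = translate_tiling (p t0) (vec_of (coords (u t)))" if "t \<in> ?V" for t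
    using pu that VB1 B1(2) unfolding vec_of_coords by blast
  moreover have "t0 \<in> ?V" using t0R \<rho>(1) by (simp add: Rball_def)
  ultimately show ?thesis using Ropen_Rball VB1 B1(2) \<delta>(2) by blast
qed

lemma diffeology_localD:
  assumes "diffeology X D" "is_param X (n, U, p)" "\<forall>V\<in>\<V>. Ropen n V" "\<Union>\<V> = U"
    "\<forall>V\<in>\<V>. (n, V, restrict p V) \<in> D"
  shows "(n, U, p) \<in> D"
proof -
  have "\<forall>n U p. is_param X (n, U, p) \<and>
        (\<exists>\<V>. (\<forall>V\<in>\<V>. Ropen n V) \<and> \<Union>\<V> = U \<and> (\<forall>V\<in>\<V>. (n, V, restrict p V) \<in> D))
        \<longrightarrow> (n, U, p) \<in> D"
    using assms(1) unfolding diffeology_def by (elim conjE) assumption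
  then show ?thesis using assms(2-5) by blast
qed

lemma diffeology_composeD:
  assumes "diffeology X D" "(n, U, p) \<in> D" "Ropen m V" "Rsmooth_map m n V g" "g ` V \<subseteq> U"
  shows "(m, V, restrict (p \<circ> g) V) \<in> D"
proof -
  have "\<forall>n U p m V g. (n, U, p) \<in> D \<and> Ropen m V \<and> Rsmooth_map m n V g \<and> g ` V \<subseteq> U
        \<longrightarrow> (m, V, restrict (p \<circ> g) V) \<in> D"
    using assms(1) unfolding diffeology_def by (elim conjE) assumption
  then show ?thesis using assms(2-5) by blast
qed

lemma dr_diffeology_subset_diffeology:
  fixes T :: "'a::euclidean_space set set"
  assumes D: "diffeology (tiling_space T) D" and F: "translation_params T \<subseteq> D"
  shows "dr_diffeology T \<subseteq> D"
proof
  fix P assume "P \<in> dr_diffeology T"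
  then obtain n U p where P: "P = (n, U, p)" "(n, U, p) \<in> dr_diffeology T" by (cases P) blast
  then have par: "is_param (tiling_space T) (n, U, p)" unfolding mem_dr_diffeology by blast
  define \<V> where "\<V> = {V. Ropen n V \<and> V \<subseteq> U \<and> (n, V, restrict p V) \<in> D}"
  have "\<exists>V\<in>\<V>. t0 \<in> V" if t0: "t0 \<in> U" for t0
  proof -
    obtain V g where V: "Ropen n V" "t0 \<in> V" "V \<subseteq> U" "Rsmooth_map n DIM('a) V g"
      "\<forall>t\<in>V. p t = translate_tiling (p t0) (vec_of (g t))"
      using dr_diffeology_locally_smooth_translate[OF P(2) t0] by blast
    define F where "F = restrict (\<lambda>x. translate_tiling (p t0) (vec_of x :: 'a)) (Rn DIM('a))"
    have "(DIM('a), Rn DIM('a), F) \<in> D"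
      using F par t0 unfolding translation_params_def F_def is_param_iff by blast
    moreover have gR: "g ` V \<subseteq> Rn DIM('a)" using V(4) unfolding Rsmooth_map_def by blast
    ultimately have "(n, V, restrict (F \<circ> g) V) \<in> D" by (rule diffeology_composeD[OF D _ V(1) V(4)])
    moreover have "restrict (F \<circ> g) V = restrict p V"
      using V(5) gR by (auto simp: F_def fun_eq_iff)
    ultimately show ?thesis using V(1-3) \<V>_def by auto
  qed
  then have U: "\<Union>\<V> = U" unfolding \<V>_def by blast
  show "P \<in> D" unfolding P(1) by (rule diffeology_localD[OF D par _ U]) (auto simp: \<V>_def)
qed

theorem theorem5p8:
  fixes T :: "'a::euclidean_space set set"
  assumes "is_tiling T"
  shows "generated_diffeology (tiling_space T) (translation_params T) = dr_diffeology T"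
proof
  show "generated_diffeology (tiling_space T) (translation_params T) \<subseteq> dr_diffeology T"
    by (rule generated_diffeology_subset_dr_diffeology)
  show "dr_diffeology T \<subseteq> generated_diffeology (tiling_space T) (translation_params T)"
    unfolding generated_diffeology_def using dr_diffeology_subset_diffeology by blast
qed

end
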